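(* Let $G$ be a finite graph and $e$ a pendant edge of $G$ (an edge one of whose endpoints has degree one). Then for each $i$, $H^i(G)\cong H^i(G/e)\{1\}$ as graded abelian groups.
   Context: Graphs are finite; loops and multiple edges allowed. $G/e$ is $G$ with $e$ contracted to a point. For a graded module $\mathcal{M}=\bigoplus_jM_j$, the shift $\mathcal{M}\{\ell\}$ has $\mathcal{M}\{\ell\}_j=M_{j-\ell}$. For $G=(V,E)$ and $s\subseteq E$, $[G:s]$ is the spanning subgraph with edge set $s$. With $1*1=1$, $1*x=x*1=x$, $x*x=0$: an enhanced state is $S=(s,c)$, $s\subseteq E$, $c$ assigning $1$ or $x$ to each component of $[G:s]$; $i(S)=|s|$, $j(S)=$ number of components colored $x$. $C^{i,j}(G)$ is free abelian on enhanced states with $i(S)=i,j(S)=j$; $C^i(G)=\bigoplus_jC^{i,j}(G)$, graded by $j$. For an ordering of the edges, $d(S)=\sum_{e'\in E\setminus s}(-1)^{n(e')}S_{e'}$, $n(e')$ the number of edges of $s$ ordered before $e'$; $S_{e'}=(s\cup\{e'\},c_{e'})$ where, if $e'$ joins a component to itself, colors are unchanged, and if $e'$ joins distinct components $E_1,E_2$ the merged component gets $c(E_1)*c(E_2)$ (and $S_{e'}=0$ if this product is $0$). $H^i(G)=\bigoplus_jH^{i,j}(G)$ is the cohomology, graded by $j$. *)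

theory Defs
  imports "HOL-Algebra.Coset"
begin

text \<open>A graph: vertex set, edge set, and for each edge the set of its endpoints
(one endpoint for a loop, two for an ordinary edge).\<close>
record ('v, 'e) graph =
  verts :: "'v set"
  edges :: "'e set"
  ends  :: "'e \<Rightarrow> 'v set"

definition wf_graph :: "('v, 'e) graph \<Rightarrow> bool" where
  "wf_graph G \<longleftrightarrow> finite (verts G) \<and> finite (edges G) \<and>
     (\<forall>f \<in> edges G. ends G f \<subseteq> verts G \<and> 1 \<le> card (ends G f) \<and> card (ends G f) \<le> 2)"

definition degree :: "('v, 'e) graph \<Rightarrow> 'v \<Rightarrow> nat" where
  "degree G v = card {f \<in> edges G. v \<in> ends G f \<and> card (ends G f) = 2}
              + 2 * card {f \<in> edges G. ends G f = {v}}"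

definition pendant_edge :: "('v, 'e) graph \<Rightarrow> 'e \<Rightarrow> bool" where
  "pendant_edge G e \<longleftrightarrow> e \<in> edges G \<and> (\<exists>v \<in> ends G e. degree G v = 1)"

text \<open>Contraction G/e: the endpoints of e are identified into a single vertex.
Vertices of G/e are the classes of the vertices of G (singletons, except
the class ends G e).\<close>
definition vclass :: "('v, 'e) graph \<Rightarrow> 'e \<Rightarrow> 'v \<Rightarrow> 'v set" where
  "vclass G e x = (if x \<in> ends G e then ends G e else {x})"

definition contract :: "('v, 'e) graph \<Rightarrow> 'e \<Rightarrow> ('v set, 'e) graph" where
  "contract G e = \<lparr> verts = vclass G e ` verts G,
                    edges = edges G - {e},
                    ends = (\<lambda>f. vclass G e ` ends G f) \<rparr>"

definition adj_in :: "('v, 'e) graph \<Rightarrow> 'e set \<Rightarrow> 'v \<Rightarrow> 'v \<Rightarrow> bool" where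
  "adj_in G s x y \<longleftrightarrow> (\<exists>f \<in> s. x \<in> ends G f \<and> y \<in> ends G f)"

definition conn_rel :: "('v, 'e) graph \<Rightarrow> 'e set \<Rightarrow> ('v \<times> 'v) set" where
  "conn_rel G s = {(x, y). x \<in> verts G \<and> y \<in> verts G \<and> (adj_in G s)\<^sup>*\<^sup>* x y}"

definition comps :: "('v, 'e) graph \<Rightarrow> 'e set \<Rightarrow> 'v set set" where
  "comps G s = verts G // conn_rel G s"

text \<open>An enhanced state is a pair (s, c); c Q = True means component Q is colored x,
c Q = False means colored 1. c is normalised to False outside the components.\<close>
type_synonym ('v, 'e) estate = "'e set \<times> ('v set \<Rightarrow> bool)"

definition states :: "('v, 'e) graph \<Rightarrow> ('v, 'e) estate set" where
  "states G = {(s, c). s \<subseteq> edges G \<and> (\<forall>Q. Q \<notin> comps G s \<longrightarrow> \<not> c Q)}"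

definition ideg :: "('v, 'e) estate \<Rightarrow> int" where
  "ideg S = int (card (fst S))"

definition jdeg :: "('v, 'e) graph \<Rightarrow> ('v, 'e) estate \<Rightarrow> int" where
  "jdeg G S = int (card {Q \<in> comps G (fst S). snd S Q})"

text \<open>The state S_{e'}: None represents 0 (product x*x = 0).
T is the set of components of [G:s] met by e' (one or two of them).\<close>
definition add_edge :: "('v, 'e) graph \<Rightarrow> ('v, 'e) estate \<Rightarrow> 'e \<Rightarrow> ('v, 'e) estate option" where
  "add_edge G S e' =
     (let s = fst S; c = snd S;
          T = {Q \<in> comps G s. Q \<inter> ends G e' \<noteq> {}};
          M = \<Union>T
      in if card T \<ge> 2 \<and> (\<forall>Q \<in> T. c Q) then None
         else Some (insert e' s,
                    (\<lambda>Q. if Q = M then (\<exists>Q' \<in> T. c Q') else if Q \<in> T then False else c Q)))"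

text \<open>Edge ordering given by a map r, injective on the edges; n(e') counts the
edges of s ordered before e'.\<close>
definition nbefore :: "('e \<Rightarrow> nat) \<Rightarrow> 'e set \<Rightarrow> 'e \<Rightarrow> nat" where
  "nbefore r s e' = card {f \<in> s. r f < r e'}"

type_synonym ('v, 'e) chain = "('v, 'e) estate \<Rightarrow> int"

text \<open>C^{i,j}(G): the free abelian group on enhanced states of bidegree (i,j),
realised as integer functions supported on those states.\<close>
definition chains :: "('v, 'e) graph \<Rightarrow> int \<Rightarrow> int \<Rightarrow> ('v, 'e) chain set" where
  "chains G i j = {\<phi>. \<forall>S. \<phi> S \<noteq> 0 \<longrightarrow> S \<in> states G \<and> ideg S = i \<and> jdeg G S = j}"

definition diff :: "('v, 'e) graph \<Rightarrow> ('e \<Rightarrow> nat) \<Rightarrow> ('v, 'e) chain \<Rightarrow> ('v, 'e) chain" where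
  "diff G r \<phi> = (\<lambda>T. \<Sum>S \<in> states G. \<Sum>e' \<in> edges G - fst S.
       (case add_edge G S e' of
          None \<Rightarrow> 0
        | Some T' \<Rightarrow> (if T' = T then (-1) ^ nbefore r (fst S) e' * \<phi> S else 0)))"

definition cycles :: "('v, 'e) graph \<Rightarrow> ('e \<Rightarrow> nat) \<Rightarrow> int \<Rightarrow> int \<Rightarrow> ('v, 'e) chain set" where
  "cycles G r i j = {\<phi> \<in> chains G i j. diff G r \<phi> = (\<lambda>_. 0)}"

definition boundaries :: "('v, 'e) graph \<Rightarrow> ('e \<Rightarrow> nat) \<Rightarrow> int \<Rightarrow> int \<Rightarrow> ('v, 'e) chain set" where
  "boundaries G r i j = diff G r ` chains G (i - 1) j"

definition cycle_group :: "('v, 'e) graph \<Rightarrow> ('e \<Rightarrow> nat) \<Rightarrow> int \<Rightarrow> int \<Rightarrow> ('v, 'e) chain monoid" where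
  "cycle_group G r i j = \<lparr> carrier = cycles G r i j, mult = (\<lambda>x y S. x S + y S), one = (\<lambda>_. 0) \<rparr>"

text \<open>H^{i,j}(G), the degree-j part of H^i(G), as an (abelian) group.\<close>
definition cohom :: "('v, 'e) graph \<Rightarrow> ('e \<Rightarrow> nat) \<Rightarrow> int \<Rightarrow> int \<Rightarrow> ('v, 'e) chain set monoid" where
  "cohom G r i j = cycle_group G r i j Mod boundaries G r i j"

end

theory Submission
  imports Defs
begin

section \<open>Quotients of groups of integer-valued functions\<close>

definition additive_subgroup :: "('a \<Rightarrow> int) set \<Rightarrow> bool" where
  "additive_subgroup B \<longleftrightarrow> (\<lambda>_. 0) \<in> B \<and> (\<forall>x\<in>B. \<forall>y\<in>B. (\<lambda>S. x S + y S) \<in> B) \<and>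
     (\<forall>x\<in>B. (\<lambda>S. - x S) \<in> B)"

definition pointwise_monoid :: "('a \<Rightarrow> int) set \<Rightarrow> ('a \<Rightarrow> int) monoid" where
  "pointwise_monoid C = \<lparr>carrier = C, mult = (\<lambda>x y S. x S + y S), one = (\<lambda>_. 0)\<rparr>"

abbreviation translate :: "('a \<Rightarrow> int) set \<Rightarrow> ('a \<Rightarrow> int) \<Rightarrow> ('a \<Rightarrow> int) set" where
  "translate B a \<equiv> (\<lambda>b S. b S + a S) ` B"

lemma additive_subgroup_zero: "additive_subgroup B \<Longrightarrow> (\<lambda>_. 0) \<in> B"
  by (simp add: additive_subgroup_def)

lemma additive_subgroup_add:
  "additive_subgroup B \<Longrightarrow> x \<in> B \<Longrightarrow> y \<in> B \<Longrightarrow> (\<lambda>S. x S + y S) \<in> B"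
  by (simp add: additive_subgroup_def)

lemma additive_subgroup_neg: "additive_subgroup B \<Longrightarrow> x \<in> B \<Longrightarrow> (\<lambda>S. - x S) \<in> B"
  by (simp add: additive_subgroup_def)

lemma additive_subgroup_diff:
  assumes "additive_subgroup B" "x \<in> B" "y \<in> B"
  shows "(\<lambda>S. x S - y S) \<in> B"
  using additive_subgroup_add[OF assms(1,2) additive_subgroup_neg[OF assms(1,3)]] by simp

lemma carrier_pointwise_monoid [simp]: "carrier (pointwise_monoid C) = C"
  by (simp add: pointwise_monoid_def)

lemma mult_pointwise_monoid [simp]: "mult (pointwise_monoid C) x y = (\<lambda>S. x S + y S)"
  by (simp add: pointwise_monoid_def)

lemma carrier_pointwise_FactGroup: "carrier (pointwise_monoid C Mod B) = translate B ` C"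
  by (auto simp: FactGroup_def RCOSETS_def r_coset_def)

lemma translate_memI: "y \<in> B \<Longrightarrow> f = (\<lambda>S. y S + c S) \<Longrightarrow> f \<in> translate B c"
  by auto

lemma translate_eq_iff:
  assumes B: "additive_subgroup B"
  shows "translate B a = translate B c \<longleftrightarrow> (\<lambda>S. a S - c S) \<in> B"
proof
  assume eq: "translate B a = translate B c"
  have "(\<lambda>S. (\<lambda>_. 0::int) S + a S) \<in> translate B a"
    using additive_subgroup_zero[OF B] by (rule imageI)
  then obtain b where "b \<in> B" "a = (\<lambda>S. b S + c S)"
    using eq by auto
  then show "(\<lambda>S. a S - c S) \<in> B" by simp
next
  have shift: "translate B a \<subseteq> translate B c" if d: "(\<lambda>S. a S - c S) \<in> B" for a c
  proof
    fix z assume "z \<in> translate B a"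
    then obtain b where "b \<in> B" "z = (\<lambda>S. b S + a S)" by auto
    moreover have "(\<lambda>S. b S + (a S - c S)) \<in> B"
      using additive_subgroup_add[OF B \<open>b \<in> B\<close> d] by simp
    ultimately show "z \<in> translate B c"
      by (intro translate_memI[of "\<lambda>S. b S + (a S - c S)"]) auto
  qed
  assume d: "(\<lambda>S. a S - c S) \<in> B"
  then have "(\<lambda>S. c S - a S) \<in> B"
    using additive_subgroup_neg[OF B d] by simp
  with d show "translate B a = translate B c"
    using shift by blast
qed

lemma set_mult_translate:
  assumes B: "additive_subgroup B"
  shows "set_mult (pointwise_monoid C) (translate B a) (translate B c) = translate B (\<lambda>S. a S + c S)"
proof (intro equalityI subsetI)
  fix z assume "z \<in> set_mult (pointwise_monoid C) (translate B a) (translate B c)"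
  then obtain b1 b2 where b: "b1 \<in> B" "b2 \<in> B" "z = (\<lambda>S. b1 S + a S + (b2 S + c S))"
    unfolding set_mult_def by auto
  then show "z \<in> translate B (\<lambda>S. a S + c S)"
    using additive_subgroup_add[OF B b(1,2)]
    by (intro translate_memI[of "\<lambda>S. b1 S + b2 S"]) (auto simp: algebra_simps)
next
  fix z assume "z \<in> translate B (\<lambda>S. a S + c S)"
  then obtain b where b: "b \<in> B" "z = (\<lambda>S. b S + (a S + c S))" by auto
  have "z = mult (pointwise_monoid C) (\<lambda>S. b S + a S) (\<lambda>S. (\<lambda>_. 0) S + c S)"
    using b by auto
  moreover have "(\<lambda>S. (\<lambda>_. 0) S + c S) \<in> translate B c"
    using additive_subgroup_zero[OF B] by (rule imageI)
  ultimately show "z \<in> set_mult (pointwise_monoid C) (translate B a) (translate B c)"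
    using b unfolding set_mult_def by blast
qed

text \<open>The boundaries need not lie inside the cycles here, so the library's isomorphism theorems
  for factor groups do not apply; the isomorphism of coset spaces is built by hand.\<close>

lemma pointwise_FactGroup_iso:
  fixes \<Phi> :: "('a \<Rightarrow> int) \<Rightarrow> ('b \<Rightarrow> int)"
  assumes C1: "additive_subgroup C1" and B1: "additive_subgroup B1" and B2: "additive_subgroup B2"
    and add: "\<And>x y. x \<in> C1 \<Longrightarrow> y \<in> C1 \<Longrightarrow> \<Phi> (\<lambda>S. x S + y S) = (\<lambda>S. \<Phi> x S + \<Phi> y S)"
    and onto: "\<Phi> ` C1 = C2"
    and reflect: "\<And>x. x \<in> C1 \<Longrightarrow> \<Phi> x \<in> B2 \<longleftrightarrow> x \<in> B1"
  shows "pointwise_monoid C1 Mod B1 \<cong> pointwise_monoid C2 Mod B2"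
proof -
  have sub: "\<Phi> (\<lambda>S. x S - a S) = (\<lambda>S. \<Phi> x S - \<Phi> a S)" if "x \<in> C1" "a \<in> C1" for x a
  proof -
    have "\<Phi> x = \<Phi> (\<lambda>S. a S + (\<lambda>S. x S - a S) S)" by simp
    also have "\<dots> = (\<lambda>S. \<Phi> a S + \<Phi> (\<lambda>S. x S - a S) S)"
      using add additive_subgroup_diff[OF C1] that by blast
    finally show ?thesis by (auto simp: fun_eq_iff)
  qed
  have translate_eq_iff': "translate B2 (\<Phi> a) = translate B2 (\<Phi> c) \<longleftrightarrow> translate B1 a = translate B1 c"
    if "a \<in> C1" "c \<in> C1" for a c
    using sub[OF that] reflect[OF additive_subgroup_diff[OF C1 that]]
    by (simp add: translate_eq_iff[OF B1] translate_eq_iff[OF B2])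
  define h where "h X = translate B2 (\<Phi> (SOME x. x \<in> C1 \<and> X = translate B1 x))" for X
  have h: "h (translate B1 a) = translate B2 (\<Phi> a)" if a: "a \<in> C1" for a
  proof -
    let ?x = "SOME x. x \<in> C1 \<and> translate B1 a = translate B1 x"
    have "?x \<in> C1 \<and> translate B1 a = translate B1 ?x"
      by (rule someI[of _ a]) (use a in auto)
    then have "translate B2 (\<Phi> ?x) = translate B2 (\<Phi> a)"
      using translate_eq_iff'[OF _ a] by simp
    then show ?thesis unfolding h_def .
  qed
  have "h \<in> iso (pointwise_monoid C1 Mod B1) (pointwise_monoid C2 Mod B2)"
  proof (rule isoI)
    show "h \<in> hom (pointwise_monoid C1 Mod B1) (pointwise_monoid C2 Mod B2)"
    proof (rule homI)
      fix X assume "X \<in> carrier (pointwise_monoid C1 Mod B1)"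
      then show "h X \<in> carrier (pointwise_monoid C2 Mod B2)"
        unfolding carrier_pointwise_FactGroup using h onto by auto
    next
      fix X Y assume "X \<in> carrier (pointwise_monoid C1 Mod B1)" "Y \<in> carrier (pointwise_monoid C1 Mod B1)"
      then obtain a c where a: "a \<in> C1" "X = translate B1 a" and c: "c \<in> C1" "Y = translate B1 c"
        unfolding carrier_pointwise_FactGroup by auto
      have "h (X \<otimes>\<^bsub>pointwise_monoid C1 Mod B1\<^esub> Y) = translate B2 (\<Phi> (\<lambda>S. a S + c S))"
        using set_mult_translate[OF B1] h additive_subgroup_add[OF C1 a(1) c(1)] a c
        by (simp add: FactGroup_def)
      also have "\<dots> = h X \<otimes>\<^bsub>pointwise_monoid C2 Mod B2\<^esub> h Y"
        using set_mult_translate[OF B2] add[OF a(1) c(1)] a c h by (simp add: FactGroup_def)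
      finally show "h (X \<otimes>\<^bsub>pointwise_monoid C1 Mod B1\<^esub> Y) = h X \<otimes>\<^bsub>pointwise_monoid C2 Mod B2\<^esub> h Y" .
    qed
    show "bij_betw h (carrier (pointwise_monoid C1 Mod B1)) (carrier (pointwise_monoid C2 Mod B2))"
      unfolding bij_betw_def carrier_pointwise_FactGroup
    proof
      show "inj_on h (translate B1 ` C1)"
      proof (rule inj_onI)
        fix X Y assume "X \<in> translate B1 ` C1" "Y \<in> translate B1 ` C1" and "h X = h Y"
        then obtain a c where "a \<in> C1" "c \<in> C1" "X = translate B1 a" "Y = translate B1 c"
          and "h (translate B1 a) = h (translate B1 c)" by blast
        then show "X = Y" using h translate_eq_iff' by simp
      qed
      show "h ` translate B1 ` C1 = translate B2 ` C2"
        using h onto by (auto simp: image_image)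
    qed
  qed
  then show ?thesis unfolding is_iso_def by blast
qed

section \<open>Components and colourings of spanning subgraphs\<close>

lemma wf_graph_finite: "wf_graph G \<Longrightarrow> finite (verts G) \<and> finite (edges G)"
  by (auto simp: wf_graph_def)

lemma wf_graph_ends_subset: "wf_graph G \<Longrightarrow> f \<in> edges G \<Longrightarrow> ends G f \<subseteq> verts G"
  by (auto simp: wf_graph_def)

lemma wf_graph_ends_nonempty: "wf_graph G \<Longrightarrow> f \<in> edges G \<Longrightarrow> ends G f \<noteq> {}"
  unfolding wf_graph_def by (metis card.empty not_one_le_zero)

lemma wf_graph_finite_ends: "wf_graph G \<Longrightarrow> f \<in> edges G \<Longrightarrow> finite (ends G f)"
  unfolding wf_graph_def by (metis card.infinite not_one_le_zero)

lemma wf_graph_ends_not_distinct: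
  assumes wf: "wf_graph G" and f: "f \<in> edges G" and "a \<in> ends G f" "b \<in> ends G f" "c \<in> ends G f"
  shows "a = b \<or> a = c \<or> b = c"
proof (rule ccontr)
  assume "\<not> (a = b \<or> a = c \<or> b = c)"
  then have "card {a, b, c} = 3" by auto
  moreover have "card {a, b, c} \<le> card (ends G f)"
    using assms wf_graph_finite_ends[OF wf f] by (intro card_mono) auto
  moreover have "card (ends G f) \<le> 2" using wf f by (auto simp: wf_graph_def)
  ultimately show False by simp
qed

lemma adj_in_rtranclp_sym: "(adj_in G s)\<^sup>*\<^sup>* x y \<Longrightarrow> (adj_in G s)\<^sup>*\<^sup>* y x"
proof (induction rule: rtranclp_induct)
  case (step y z)
  then have "adj_in G s z y" by (auto simp: adj_in_def)
  then show ?case using step.IH by (rule converse_rtranclp_into_rtranclp)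
qed simp

lemma equiv_conn_rel: "equiv (verts G) (conn_rel G s)"
  unfolding equiv_def refl_on_def sym_def trans_def conn_rel_def
  by (auto intro: adj_in_rtranclp_sym rtranclp_trans)

lemma conn_rel_refl: "x \<in> verts G \<Longrightarrow> (x, x) \<in> conn_rel G s"
  by (simp add: conn_rel_def)

lemma conn_rel_sym: "(x, y) \<in> conn_rel G s \<Longrightarrow> (y, x) \<in> conn_rel G s"
  by (auto simp: conn_rel_def intro: adj_in_rtranclp_sym)

lemma conn_rel_trans: "(x, y) \<in> conn_rel G s \<Longrightarrow> (y, z) \<in> conn_rel G s \<Longrightarrow> (x, z) \<in> conn_rel G s"
  by (auto simp: conn_rel_def intro: rtranclp_trans)

lemma conn_rel_verts: "(x, y) \<in> conn_rel G s \<Longrightarrow> x \<in> verts G \<and> y \<in> verts G"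
  by (auto simp: conn_rel_def)

lemma conn_rel_mono: "s \<subseteq> t \<Longrightarrow> (x, y) \<in> conn_rel G s \<Longrightarrow> (x, y) \<in> conn_rel G t"
proof -
  assume "s \<subseteq> t" "(x, y) \<in> conn_rel G s"
  moreover have "adj_in G s \<le> adj_in G t"
    using \<open>s \<subseteq> t\<close> unfolding adj_in_def le_fun_def le_bool_def by blast
  ultimately show ?thesis
    unfolding conn_rel_def by (auto intro: rtranclp_mono[THEN predicate2D])
qed

lemma conn_rel_edge:
  "f \<in> s \<Longrightarrow> x \<in> ends G f \<Longrightarrow> y \<in> ends G f \<Longrightarrow> x \<in> verts G \<Longrightarrow> y \<in> verts G \<Longrightarrow>
    (x, y) \<in> conn_rel G s"
  unfolding conn_rel_def by (auto intro!: r_into_rtranclp simp: adj_in_def)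

definition comp_of :: "('v, 'e) graph \<Rightarrow> 'e set \<Rightarrow> 'v \<Rightarrow> 'v set" where
  "comp_of G s x = conn_rel G s `` {x}"

lemma mem_comp_of: "y \<in> comp_of G s x \<longleftrightarrow> (x, y) \<in> conn_rel G s"
  by (simp add: comp_of_def)

lemma comp_of_eq_iff:
  "x \<in> verts G \<Longrightarrow> y \<in> verts G \<Longrightarrow> comp_of G s x = comp_of G s y \<longleftrightarrow> (x, y) \<in> conn_rel G s"
  using equiv_class_eq_iff[OF equiv_conn_rel, of x y G s] by (simp add: comp_of_def)

lemma comp_of_self: "x \<in> verts G \<Longrightarrow> x \<in> comp_of G s x"
  by (simp add: mem_comp_of conn_rel_refl)

lemma mem_comps_iff: "Q \<in> comps G s \<longleftrightarrow> (\<exists>x\<in>verts G. Q = comp_of G s x)"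
  unfolding comps_def quotient_def comp_of_def by blast

lemma comp_of_in_comps: "x \<in> verts G \<Longrightarrow> comp_of G s x \<in> comps G s"
  unfolding mem_comps_iff by blast

lemma comps_eq_comp_of: "Q \<in> comps G s \<Longrightarrow> x \<in> Q \<Longrightarrow> Q = comp_of G s x"
  by (metis comp_of_eq_iff conn_rel_verts mem_comp_of mem_comps_iff)

lemma finite_comps: "finite (verts G) \<Longrightarrow> finite (comps G s)"
  unfolding comps_def by (rule finite_quotient) (auto simp: conn_rel_def)

text \<open>States are handled through the colour they give to each vertex.\<close>

definition colour :: "('v, 'e) graph \<Rightarrow> ('v, 'e) estate \<Rightarrow> 'v \<Rightarrow> bool" where
  "colour G S x = snd S (comp_of G (fst S) x)"

definition induced_state :: "('v, 'e) graph \<Rightarrow> 'e set \<Rightarrow> ('v \<Rightarrow> bool) \<Rightarrow> ('v, 'e) estate" where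
  "induced_state G s f = (s, \<lambda>Q. Q \<in> comps G s \<and> (\<exists>x\<in>Q. f x))"

lemma colour_conn_rel: "(x, y) \<in> conn_rel G (fst S) \<Longrightarrow> colour G S x = colour G S y"
  by (metis colour_def comp_of_eq_iff conn_rel_verts)

lemma states_edges: "S \<in> states G \<Longrightarrow> fst S \<subseteq> edges G"
  by (auto simp: states_def)

lemma states_outside_comps: "S \<in> states G \<Longrightarrow> Q \<notin> comps G (fst S) \<Longrightarrow> \<not> snd S Q"
  unfolding states_def by auto

lemma states_eqI:
  assumes "S1 \<in> states G" "S2 \<in> states G" "fst S1 = fst S2"
    and "\<And>x. x \<in> verts G \<Longrightarrow> colour G S1 x = colour G S2 x"
  shows "S1 = S2"
proof -
  have "snd S1 Q = snd S2 Q" for Q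
  proof (cases "Q \<in> comps G (fst S1)")
    case True
    then obtain x where "x \<in> verts G" "Q = comp_of G (fst S1) x"
      unfolding mem_comps_iff by blast
    then show ?thesis using assms(3) assms(4)[of x] by (simp add: colour_def)
  next
    case False
    then show ?thesis using states_outside_comps assms(1-3) by metis
  qed
  then show ?thesis using assms(3) by (simp add: prod_eq_iff fun_eq_iff)
qed

lemma finite_states:
  assumes "wf_graph G"
  shows "finite (states G)"
proof -
  let ?F = "(\<lambda>(s, A). (s, \<lambda>Q. Q \<in> A)) ` (SIGMA s:Pow (edges G). Pow (comps G s))"
  have "states G \<subseteq> ?F"
  proof
    fix S assume S: "S \<in> states G"
    obtain s c where sc: "S = (s, c)" by (cases S)
    have "(s, {Q \<in> comps G s. c Q}) \<in> (SIGMA s:Pow (edges G). Pow (comps G s))"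
      using S sc by (auto simp: states_def)
    moreover have "S = (\<lambda>(s, A). (s, \<lambda>Q. Q \<in> A)) (s, {Q \<in> comps G s. c Q})"
      using S sc by (auto simp: states_def fun_eq_iff)
    ultimately show "S \<in> ?F" by blast
  qed
  moreover have "finite ?F"
    using assms finite_comps by (auto simp: wf_graph_def intro!: finite_SigmaI)
  ultimately show ?thesis by (rule finite_subset)
qed

lemma induced_state_in_states: "s \<subseteq> edges G \<Longrightarrow> induced_state G s f \<in> states G"
  by (simp add: induced_state_def states_def)

lemma fst_induced_state [simp]: "fst (induced_state G s f) = s"
  by (simp add: induced_state_def)

lemma colour_induced_state:
  assumes x: "x \<in> verts G" and f: "\<And>y z. (y, z) \<in> conn_rel G s \<Longrightarrow> f y = f z"
  shows "colour G (induced_state G s f) x = f x"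
proof -
  have "(\<exists>y\<in>comp_of G s x. f y) \<longleftrightarrow> f x"
    using comp_of_self[OF x] f by (auto simp: mem_comp_of)
  then show ?thesis
    using comp_of_in_comps[OF x] unfolding colour_def induced_state_def by simp
qed

lemma jdeg_eq_card_coloured:
  assumes "S \<in> states G"
  shows "jdeg G S = int (card (comp_of G (fst S) ` {x \<in> verts G. colour G S x}))"
proof -
  have "{Q \<in> comps G (fst S). snd S Q} = comp_of G (fst S) ` {x \<in> verts G. colour G S x}"
    by (auto simp: mem_comps_iff colour_def intro: comp_of_in_comps)
  then show ?thesis unfolding jdeg_def by simp
qed

section \<open>Adding an edge to a state\<close>

definition touch :: "('v, 'e) graph \<Rightarrow> 'e set \<Rightarrow> 'e \<Rightarrow> 'v \<Rightarrow> bool" where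
  "touch G s e' x \<longleftrightarrow> (\<exists>u\<in>ends G e'. (x, u) \<in> conn_rel G s)"

lemma touch_conn_rel: "touch G s e' y \<Longrightarrow> (x, y) \<in> conn_rel G s \<Longrightarrow> touch G s e' x"
  unfolding touch_def by (metis conn_rel_trans)

lemma touch_end: "u \<in> ends G e' \<Longrightarrow> u \<in> verts G \<Longrightarrow> touch G s e' u"
  unfolding touch_def by (metis conn_rel_refl)

lemma conn_rel_insertD:
  assumes wf: "wf_graph G" and e': "e' \<in> edges G" and s: "s \<subseteq> edges G"
    and xy: "(x, y) \<in> conn_rel G (insert e' s)"
  shows "(x, y) \<in> conn_rel G s \<or> (touch G s e' x \<and> touch G s e' y)"
proof -
  have x: "x \<in> verts G" and path: "(adj_in G (insert e' s))\<^sup>*\<^sup>* x y"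
    using xy by (auto simp: conn_rel_def)
  from path have "y \<in> verts G \<and> ((x, y) \<in> conn_rel G s \<or> (touch G s e' x \<and> touch G s e' y))"
  proof (induction rule: rtranclp_induct)
    case (step y z)
    from step(2) obtain f where f: "f \<in> insert e' s" "y \<in> ends G f" "z \<in> ends G f"
      by (auto simp: adj_in_def)
    have y: "y \<in> verts G" and z: "z \<in> verts G"
      using step.IH wf_graph_ends_subset[OF wf] f(1,3) e' s by blast+
    show ?case
    proof (cases "f = e'")
      case True
      then have "touch G s e' y" "touch G s e' z"
        using f(2,3) y z by (simp_all add: touch_end)
      then show ?thesis
        using step.IH z touch_conn_rel[of G s e' y x] by blast
    next
      case False
      then have yz: "(y, z) \<in> conn_rel G s"
        using f y z by (intro conn_rel_edge) auto
      have "touch G s e' y \<Longrightarrow> touch G s e' z"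
        using touch_conn_rel[OF _ conn_rel_sym[OF yz]] .
      then show ?thesis
        using step.IH z conn_rel_trans[OF _ yz] by blast
    qed
  qed (simp add: x conn_rel_refl)
  then show ?thesis by blast
qed

lemma conn_rel_insert:
  assumes wf: "wf_graph G" and e': "e' \<in> edges G" and s: "s \<subseteq> edges G"
  shows "(x, y) \<in> conn_rel G (insert e' s) \<longleftrightarrow>
    (x, y) \<in> conn_rel G s \<or> (touch G s e' x \<and> touch G s e' y)"
proof -
  have mono: "(a, b) \<in> conn_rel G s \<Longrightarrow> (a, b) \<in> conn_rel G (insert e' s)" for a b
    by (rule conn_rel_mono[rotated]) auto
  have "(x, y) \<in> conn_rel G (insert e' s)" if touching: "touch G s e' x" "touch G s e' y"
  proof -
    obtain u u' where u: "u \<in> ends G e'" "u' \<in> ends G e'"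
      and xu: "(x, u) \<in> conn_rel G s" and yu': "(y, u') \<in> conn_rel G s"
      using touching unfolding touch_def by blast
    have "(u, u') \<in> conn_rel G (insert e' s)"
      using u wf_graph_ends_subset[OF wf e'] by (intro conn_rel_edge[of e']) auto
    then show ?thesis
      by (rule conn_rel_trans[OF conn_rel_trans[OF mono[OF xu]] mono[OF conn_rel_sym[OF yu']]])
  qed
  then show ?thesis
    using conn_rel_insertD[OF assms] mono by blast
qed

lemma comp_of_insert:
  assumes wf: "wf_graph G" and e': "e' \<in> edges G" and s: "s \<subseteq> edges G"
  shows "comp_of G (insert e' s) x = (if touch G s e' x then {y. touch G s e' y} else comp_of G s x)"
proof (rule Set.set_eqI)
  fix y
  have "touch G s e' x \<Longrightarrow> (x, y) \<in> conn_rel G s \<Longrightarrow> touch G s e' y"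
    using touch_conn_rel conn_rel_sym by metis
  then show "y \<in> comp_of G (insert e' s) x \<longleftrightarrow>
      y \<in> (if touch G s e' x then {y. touch G s e' y} else comp_of G s x)"
    using conn_rel_insert[OF assms, of x y] by (auto simp: mem_comp_of)
qed

lemma comps_touched:
  assumes wf: "wf_graph G" and e': "e' \<in> edges G"
  shows "{Q \<in> comps G s. Q \<inter> ends G e' \<noteq> {}} = comp_of G s ` ends G e'"
proof (intro equalityI subsetI)
  fix Q assume "Q \<in> {Q \<in> comps G s. Q \<inter> ends G e' \<noteq> {}}"
  then obtain u where "Q \<in> comps G s" "u \<in> Q" "u \<in> ends G e'" by blast
  then show "Q \<in> comp_of G s ` ends G e'"
    using comps_eq_comp_of[of Q G s u] by blast
next
  fix Q assume "Q \<in> comp_of G s ` ends G e'"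
  then obtain u where u: "u \<in> ends G e'" "Q = comp_of G s u" by blast
  then have "u \<in> verts G" using wf_graph_ends_subset[OF wf e'] by blast
  then show "Q \<in> {Q \<in> comps G s. Q \<inter> ends G e' \<noteq> {}}"
    using u comp_of_in_comps[of u G s] comp_of_self[of u G s] by blast
qed

lemma two_le_card_comps_touched_iff:
  assumes wf: "wf_graph G" and e': "e' \<in> edges G"
  shows "2 \<le> card (comp_of G s ` ends G e') \<longleftrightarrow>
    (\<exists>p\<in>ends G e'. \<exists>q\<in>ends G e'. (p, q) \<notin> conn_rel G s)"
proof -
  have "finite (comp_of G s ` ends G e')"
    using wf_graph_finite_ends[OF wf e'] by simp
  then have "2 \<le> card (comp_of G s ` ends G e') \<longleftrightarrow>
      \<not> (\<forall>P\<in>comp_of G s ` ends G e'. \<forall>Q\<in>comp_of G s ` ends G e'. P = Q)"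
    by (subst card_le_Suc0_iff_eq[symmetric]) auto
  then have "2 \<le> card (comp_of G s ` ends G e') \<longleftrightarrow>
      (\<exists>p\<in>ends G e'. \<exists>q\<in>ends G e'. comp_of G s p \<noteq> comp_of G s q)"
    by simp
  moreover have "comp_of G s p = comp_of G s q \<longleftrightarrow> (p, q) \<in> conn_rel G s"
    if "p \<in> ends G e'" "q \<in> ends G e'" for p q
    using that wf_graph_ends_subset[OF wf e'] comp_of_eq_iff[of p G q s] by blast
  ultimately show ?thesis by auto
qed

lemma Union_comps_touched: "\<Union>(comp_of G s ` ends G e') = {y. touch G s e' y}"
  unfolding touch_def by (auto simp: mem_comp_of) (metis conn_rel_sym)+

lemma add_edge_altdef:
  assumes wf: "wf_graph G" and e': "e' \<in> edges G"
  shows "add_edge G S e' =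
    (if (\<exists>p\<in>ends G e'. \<exists>q\<in>ends G e'. (p, q) \<notin> conn_rel G (fst S)) \<and> (\<forall>u\<in>ends G e'. colour G S u)
     then None
     else Some (insert e' (fst S),
       \<lambda>Q. if Q = {y. touch G (fst S) e' y} then \<exists>u\<in>ends G e'. colour G S u
           else if Q \<in> comp_of G (fst S) ` ends G e' then False else snd S Q))"
  unfolding add_edge_def Let_def comps_touched[OF wf e'] two_le_card_comps_touched_iff[OF wf e']
    Union_comps_touched
  by (simp add: colour_def)

lemma add_edge_eq_None_iff:
  assumes "wf_graph G" "e' \<in> edges G"
  shows "add_edge G S e' = None \<longleftrightarrow>
    (\<exists>p\<in>ends G e'. \<exists>q\<in>ends G e'. (p, q) \<notin> conn_rel G (fst S)) \<and> (\<forall>u\<in>ends G e'. colour G S u)"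
  unfolding add_edge_altdef[OF assms] by simp

lemma not_touch_comp_of:
  assumes wf: "wf_graph G" and e': "e' \<in> edges G" and x: "x \<in> verts G" "\<not> touch G s e' x"
  shows "comp_of G s x \<noteq> {y. touch G s e' y}" "comp_of G s x \<notin> comp_of G s ` ends G e'"
proof -
  show "comp_of G s x \<noteq> {y. touch G s e' y}"
    using x comp_of_self[OF x(1)] by auto
  show "comp_of G s x \<notin> comp_of G s ` ends G e'"
  proof
    assume "comp_of G s x \<in> comp_of G s ` ends G e'"
    then obtain u where "u \<in> ends G e'" "comp_of G s x = comp_of G s u" by blast
    then show False
      using x wf_graph_ends_subset[OF wf e'] comp_of_eq_iff[of x G u s] unfolding touch_def by blast
  qed
qed

lemma add_edge_SomeD:
  assumes wf: "wf_graph G" and e': "e' \<in> edges G" and S: "S \<in> states G"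
    and T: "add_edge G S e' = Some T"
  shows "T \<in> states G \<and> fst T = insert e' (fst S) \<and>
    (\<forall>x\<in>verts G. colour G T x =
       (if touch G (fst S) e' x then \<exists>u\<in>ends G e'. colour G S u else colour G S x))"
proof -
  let ?s = "fst S"
  let ?M = "{y. touch G ?s e' y}"
  define c where "c Q = (if Q = ?M then \<exists>u\<in>ends G e'. colour G S u
    else if Q \<in> comp_of G ?s ` ends G e' then False else snd S Q)" for Q
  have T_eq: "T = (insert e' ?s, c)"
    using T unfolding add_edge_altdef[OF wf e'] c_def by (auto split: if_splits)
  have s: "?s \<subseteq> edges G" using states_edges[OF S] .
  have colour_T: "colour G T x = (if touch G ?s e' x then \<exists>u\<in>ends G e'. colour G S u else colour G S x)"
    if x: "x \<in> verts G" for x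
    using T_eq comp_of_insert[OF wf e' s, of x] not_touch_comp_of[OF wf e' x]
    by (cases "touch G ?s e' x") (simp_all add: colour_def c_def)
  have "Q \<in> comps G (insert e' ?s)" if "c Q" for Q
  proof (cases "Q = ?M")
    case True
    obtain u where u: "u \<in> ends G e'" using wf_graph_ends_nonempty[OF wf e'] by blast
    then have uV: "u \<in> verts G" using wf_graph_ends_subset[OF wf e'] by blast
    then have "comp_of G (insert e' ?s) u = ?M"
      using comp_of_insert[OF wf e' s] touch_end[OF u uV] by simp
    then show ?thesis using True comp_of_in_comps[OF uV, of "insert e' ?s"] by simp
  next
    case False
    then have untouched: "Q \<notin> comp_of G ?s ` ends G e'" and "snd S Q"
      using \<open>c Q\<close> unfolding c_def by (auto split: if_splits)
    then obtain z where z: "z \<in> verts G" "Q = comp_of G ?s z"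
      using states_outside_comps[OF S] unfolding mem_comps_iff by blast
    have "\<not> touch G ?s e' z"
    proof
      assume "touch G ?s e' z"
      then obtain u where "u \<in> ends G e'" "(z, u) \<in> conn_rel G ?s" unfolding touch_def by blast
      then show False
        using untouched z comp_of_eq_iff[of z G u ?s] wf_graph_ends_subset[OF wf e'] by blast
    qed
    then have "comp_of G (insert e' ?s) z = Q" using comp_of_insert[OF wf e' s, of z] z by simp
    then show ?thesis using comp_of_in_comps[OF z(1), of "insert e' ?s"] by simp
  qed
  then have "T \<in> states G" using T_eq s e' unfolding states_def by auto
  then show ?thesis using colour_T T_eq by simp
qed

lemma add_edge_eq_Some_iff:
  assumes wf: "wf_graph G" and e': "e' \<in> edges G" and S: "S \<in> states G" and T: "T \<in> states G"
  shows "add_edge G S e' = Some T \<longleftrightarrow> fst T = insert e' (fst S) \<and>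
    \<not> ((\<exists>p\<in>ends G e'. \<exists>q\<in>ends G e'. (p, q) \<notin> conn_rel G (fst S)) \<and> (\<forall>u\<in>ends G e'. colour G S u)) \<and>
    (\<forall>x\<in>verts G. colour G T x =
       (if touch G (fst S) e' x then \<exists>u\<in>ends G e'. colour G S u else colour G S x))"
  (is "?L \<longleftrightarrow> ?R")
proof
  assume ?L
  then show ?R using add_edge_SomeD[OF wf e' S] add_edge_eq_None_iff[OF wf e', of S] by auto
next
  assume R: ?R
  then obtain T0 where T0: "add_edge G S e' = Some T0"
    using add_edge_eq_None_iff[OF wf e', of S] by (cases "add_edge G S e'") auto
  have "T0 = T"
    using add_edge_SomeD[OF wf e' S T0] R by (intro states_eqI[OF _ T]) auto
  then show ?L using T0 by simp
qed

section \<open>The cochain complex\<close>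

lemma diff_altdef:
  "diff G r \<phi> T = (\<Sum>S\<in>states G. \<Sum>e'\<in>edges G - fst S.
     if add_edge G S e' = Some T then (-1) ^ nbefore r (fst S) e' * \<phi> S else 0)"
  unfolding diff_def by (intro sum.cong refl) (simp split: option.split)

definition diff_contrib ::
    "('v, 'e) graph \<Rightarrow> ('e \<Rightarrow> nat) \<Rightarrow> ('v, 'e) chain \<Rightarrow> ('v, 'e) estate \<Rightarrow> ('v, 'e) estate \<Rightarrow> int" where
  "diff_contrib G r \<phi> T S = (\<Sum>e'\<in>edges G - fst S.
     if add_edge G S e' = Some T then (-1) ^ nbefore r (fst S) e' * \<phi> S else 0)"

lemma diff_eq_sum_contrib: "diff G r \<phi> T = (\<Sum>S\<in>states G. diff_contrib G r \<phi> T S)"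
  unfolding diff_altdef diff_contrib_def ..

lemma diff_contrib_0: "\<phi> S = 0 \<Longrightarrow> diff_contrib G r \<phi> T S = 0"
  unfolding diff_contrib_def by (intro sum.neutral) simp

lemma diff_outside_states:
  assumes wf: "wf_graph G" and T: "T \<notin> states G"
  shows "diff G r \<phi> T = 0"
  unfolding diff_altdef
proof (intro sum.neutral ballI)
  fix S e' assume "S \<in> states G" "e' \<in> edges G - fst S"
  then have "add_edge G S e' \<noteq> Some T"
    using add_edge_SomeD[OF wf] T by blast
  then show "(if add_edge G S e' = Some T then (-1) ^ nbefore r (fst S) e' * \<phi> S else 0) = 0"
    by simp
qed

lemma diff_cong: "(\<And>S. S \<in> states G \<Longrightarrow> x S = y S) \<Longrightarrow> diff G r x = diff G r y"
  unfolding diff_altdef by (intro ext sum.cong refl) auto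

lemma diff_add: "diff G r (\<lambda>S. x S + y S) = (\<lambda>T. diff G r x T + diff G r y T)"
  unfolding diff_altdef by (auto simp: fun_eq_iff sum.distrib[symmetric] algebra_simps intro!: sum.cong)

lemma diff_neg: "diff G r (\<lambda>S. - x S) = (\<lambda>T. - diff G r x T)"
  unfolding diff_altdef by (auto simp: fun_eq_iff sum_negf[symmetric] intro!: sum.cong)

lemma diff_diff: "diff G r (\<lambda>S. x S - y S) = (\<lambda>T. diff G r x T - diff G r y T)"
  using diff_add[of G r x "\<lambda>S. - y S"] diff_neg[of G r y] by simp

lemma diff_eq_0_if_vanishing: "(\<And>S. S \<in> states G \<Longrightarrow> x S = 0) \<Longrightarrow> diff G r x = (\<lambda>_. 0)"
  unfolding diff_altdef by (auto simp: fun_eq_iff intro!: sum.neutral)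

lemma diff_0: "diff G r (\<lambda>_. 0) = (\<lambda>_. 0)"
  by (rule diff_eq_0_if_vanishing) simp

lemma chainsD: "\<phi> \<in> chains G i j \<Longrightarrow> \<phi> S \<noteq> 0 \<Longrightarrow> S \<in> states G \<and> ideg S = i \<and> jdeg G S = j"
  unfolding chains_def by blast

lemma chains_outside_states: "\<phi> \<in> chains G i j \<Longrightarrow> S \<notin> states G \<Longrightarrow> \<phi> S = 0"
  using chainsD by blast

lemma additive_subgroup_chains: "additive_subgroup (chains G i j)"
  unfolding additive_subgroup_def
proof (intro conjI ballI)
  fix x y assume "x \<in> chains G i j" "y \<in> chains G i j"
  moreover have "x S + y S \<noteq> 0 \<Longrightarrow> x S \<noteq> 0 \<or> y S \<noteq> 0" for S
    by auto
  ultimately show "(\<lambda>S. x S + y S) \<in> chains G i j"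
    unfolding chains_def by blast
qed (auto simp: chains_def)

lemma additive_subgroup_cycles: "additive_subgroup (cycles G r i j)"
  using additive_subgroup_chains[of G i j]
  unfolding additive_subgroup_def cycles_def by (simp add: diff_0 diff_add diff_neg)

lemma additive_subgroup_boundaries: "additive_subgroup (boundaries G r i j)"
  unfolding additive_subgroup_def boundaries_def
proof (intro conjI ballI)
  show "(\<lambda>_. 0) \<in> diff G r ` chains G (i - 1) j"
    using diff_0[of G r] additive_subgroup_zero[OF additive_subgroup_chains] by (rule image_eqI[OF sym])
next
  fix x y assume "x \<in> diff G r ` chains G (i - 1) j" "y \<in> diff G r ` chains G (i - 1) j"
  then obtain a b where ab: "a \<in> chains G (i - 1) j" "b \<in> chains G (i - 1) j"
    and "x = diff G r a" "y = diff G r b"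
    by blast
  then have "(\<lambda>S. x S + y S) = diff G r (\<lambda>S. a S + b S)"
    by (simp add: diff_add)
  then show "(\<lambda>S. x S + y S) \<in> diff G r ` chains G (i - 1) j"
    using additive_subgroup_add[OF additive_subgroup_chains ab] by (rule image_eqI)
next
  fix x assume "x \<in> diff G r ` chains G (i - 1) j"
  then obtain a where a: "a \<in> chains G (i - 1) j" and "x = diff G r a" by blast
  then have "(\<lambda>S. - x S) = diff G r (\<lambda>S. - a S)"
    by (simp add: diff_neg)
  then show "(\<lambda>S. - x S) \<in> diff G r ` chains G (i - 1) j"
    using additive_subgroup_neg[OF additive_subgroup_chains a] by (rule image_eqI)
qed

lemma mem_boundaries_iff: "x \<in> boundaries G r i j \<longleftrightarrow> (\<exists>y\<in>chains G (i - 1) j. x = diff G r y)"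
  by (auto simp: boundaries_def)

lemma cohom_eq_pointwise_FactGroup:
  "cohom G r i j = pointwise_monoid (cycles G r i j) Mod boundaries G r i j"
  by (simp add: cohom_def cycle_group_def pointwise_monoid_def)

section \<open>Independence of the edge ordering\<close>

text \<open>Changing the ordering from \<open>r\<close> to \<open>r2\<close> is compensated by the sign
  \<open>(-1)^inv(s)\<close>, where \<open>inv(s)\<close> counts the pairs of edges of \<open>s\<close> that the two orderings
  put in opposite order.\<close>

definition inversions :: "('e \<Rightarrow> nat) \<Rightarrow> ('e \<Rightarrow> nat) \<Rightarrow> 'e set \<Rightarrow> ('e \<times> 'e) set" where
  "inversions r r2 s = {(f, g). f \<in> s \<and> g \<in> s \<and> r f < r g \<and> r2 g < r2 f}"

definition inversion_sign :: "('e \<Rightarrow> nat) \<Rightarrow> ('e \<Rightarrow> nat) \<Rightarrow> 'e set \<Rightarrow> int" where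
  "inversion_sign r r2 s = (-1) ^ card (inversions r r2 s)"

lemma inversion_sign_commute: "inversion_sign r r2 s = inversion_sign r2 r s"
proof -
  have "inversions r2 r s = (\<lambda>(f, g). (g, f)) ` inversions r r2 s"
    by (auto simp: inversions_def image_iff)
  then have "card (inversions r2 r s) = card (inversions r r2 s)"
    using card_image[OF swap_inj_on] by simp
  then show ?thesis by (simp add: inversion_sign_def)
qed

lemma inversion_sign_square: "inversion_sign r r2 s * inversion_sign r r2 s = 1"
  by (simp add: inversion_sign_def power_mult_distrib[symmetric])

lemma inversion_sign_insert:
  assumes fin: "finite s" and e': "e' \<notin> s"
    and inj: "inj_on r (insert e' s)" and inj2: "inj_on r2 (insert e' s)"
  shows "inversion_sign r r2 (insert e' s) * (-1) ^ nbefore r s e' =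
    inversion_sign r r2 s * (-1) ^ nbefore r2 s e'"
proof -
  define A where "A = {f\<in>s. r f < r e' \<and> r2 e' < r2 f}"
  define B where "B = {g\<in>s. r e' < r g \<and> r2 g < r2 e'}"
  define C where "C = {f\<in>s. r f < r e' \<and> r2 f < r2 e'}"
  have finite: "finite A" "finite B" "finite C" using fin by (auto simp: A_def B_def C_def)
  have ne: "r f \<noteq> r e' \<and> r2 f \<noteq> r2 e'" if "f \<in> s" for f
    using inj inj2 e' that by (metis inj_on_contraD insertCI)
  have ins: "inversions r r2 (insert e' s) =
      inversions r r2 s \<union> ((\<lambda>f. (f, e')) ` A \<union> (\<lambda>g. (e', g)) ` B)"
    unfolding inversions_def A_def B_def by auto
  have "finite (inversions r r2 s)"
    by (rule finite_subset[of _ "s \<times> s"]) (auto simp: inversions_def fin)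
  moreover have "inversions r r2 s \<inter> ((\<lambda>f. (f, e')) ` A \<union> (\<lambda>g. (e', g)) ` B) = {}"
    using e' unfolding inversions_def by auto
  moreover have "(\<lambda>f. (f, e')) ` A \<inter> (\<lambda>g. (e', g)) ` B = {}"
    using e' unfolding A_def B_def by auto
  moreover have "card ((\<lambda>f. (f, e')) ` A) = card A" "card ((\<lambda>g. (e', g)) ` B) = card B"
    by (auto intro: card_image simp: inj_on_def)
  ultimately have card_ins: "card (inversions r r2 (insert e' s)) = card (inversions r r2 s) + card A + card B"
    unfolding ins using finite by (simp add: card_Un_disjoint)
  have "{f\<in>s. r f < r e'} = C \<union> A" "C \<inter> A = {}"
    unfolding A_def C_def by (auto dest: ne simp: linorder_neq_iff)
  then have nbefore_r: "nbefore r s e' = card C + card A"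
    unfolding nbefore_def using card_Un_disjoint finite by simp
  have "{f\<in>s. r2 f < r2 e'} = C \<union> B" "C \<inter> B = {}"
    unfolding B_def C_def by (auto dest: ne simp: linorder_neq_iff)
  then have nbefore_r2: "nbefore r2 s e' = card C + card B"
    unfolding nbefore_def using card_Un_disjoint finite by simp
  have "((-1::int) ^ card A) * (-1) ^ card A = 1"
    by (simp add: power_mult_distrib[symmetric])
  then show ?thesis
    unfolding inversion_sign_def card_ins nbefore_r nbefore_r2 by (simp add: power_add algebra_simps)
qed

lemma diff_inversion_sign:
  assumes wf: "wf_graph G" and inj: "inj_on r (edges G)" and inj2: "inj_on r2 (edges G)"
  shows "diff G r2 (\<lambda>S. inversion_sign r r2 (fst S) * \<phi> S) =
    (\<lambda>T. inversion_sign r r2 (fst T) * diff G r \<phi> T)"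
proof (rule ext)
  fix T
  have "(if add_edge G S e' = Some T
          then (-1) ^ nbefore r2 (fst S) e' * (inversion_sign r r2 (fst S) * \<phi> S) else 0) =
        inversion_sign r r2 (fst T) *
          (if add_edge G S e' = Some T then (-1) ^ nbefore r (fst S) e' * \<phi> S else 0)"
    if S: "S \<in> states G" and e': "e' \<in> edges G - fst S" for S e'
  proof (cases "add_edge G S e' = Some T")
    case True
    have s: "fst S \<subseteq> edges G" using states_edges[OF S] .
    then have "finite (fst S)" using wf_graph_finite[OF wf] finite_subset by blast
    then have "inversion_sign r r2 (insert e' (fst S)) * (-1) ^ nbefore r (fst S) e' =
        inversion_sign r r2 (fst S) * (-1) ^ nbefore r2 (fst S) e'"
      using e' s by (intro inversion_sign_insert inj_on_subset[OF inj] inj_on_subset[OF inj2]) auto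
    moreover have "fst T = insert e' (fst S)"
      using add_edge_SomeD[OF wf _ S True] e' by simp
    ultimately show ?thesis using True by (simp add: algebra_simps)
  qed simp
  then show "diff G r2 (\<lambda>S. inversion_sign r r2 (fst S) * \<phi> S) T =
      inversion_sign r r2 (fst T) * diff G r \<phi> T"
    unfolding diff_altdef sum_distrib_left by (intro sum.cong refl) auto
qed

lemma cohom_iso_change_ordering:
  assumes wf: "wf_graph G" and inj: "inj_on r (edges G)" and inj2: "inj_on r2 (edges G)"
  shows "cohom G r i j \<cong> cohom G r2 i j"
proof -
  define \<Phi> where "\<Phi> \<phi> = (\<lambda>S. inversion_sign r r2 (fst S) * \<phi> S)" for \<phi> :: "('a, 'b) chain"
  have involution: "\<Phi> (\<Phi> \<phi>) = \<phi>" for \<phi>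
    unfolding \<Phi>_def by (simp add: mult.assoc[symmetric] inversion_sign_square)
  have diff_\<Phi>: "diff G r2 (\<Phi> \<phi>) = \<Phi> (diff G r \<phi>)" for \<phi>
    unfolding \<Phi>_def using diff_inversion_sign[OF wf inj inj2] .
  have diff_\<Phi>': "diff G r (\<Phi> \<phi>) = \<Phi> (diff G r2 \<phi>)" for \<phi>
    unfolding \<Phi>_def using diff_inversion_sign[OF wf inj2 inj] inversion_sign_commute[of r2 r] by simp
  have chains_\<Phi>: "\<phi> \<in> chains G a b \<Longrightarrow> \<Phi> \<phi> \<in> chains G a b" for \<phi> a b
    unfolding \<Phi>_def chains_def by auto
  have "\<Phi> (\<lambda>_. 0) = (\<lambda>_. 0)" by (simp add: \<Phi>_def)
  then have \<Phi>_eq_0_iff: "\<Phi> \<phi> = (\<lambda>_. 0) \<longleftrightarrow> \<phi> = (\<lambda>_. 0)" for \<phi>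
    using involution by metis
  have cycles_\<Phi>: "\<Phi> \<phi> \<in> cycles G r2 i j" if "\<phi> \<in> cycles G r i j" for \<phi>
    using that chains_\<Phi> diff_\<Phi> \<Phi>_eq_0_iff by (simp add: cycles_def)
  have cycles_\<Phi>': "\<Phi> \<phi> \<in> cycles G r i j" if "\<phi> \<in> cycles G r2 i j" for \<phi>
    using that chains_\<Phi> diff_\<Phi>' \<Phi>_eq_0_iff by (simp add: cycles_def)
  show ?thesis unfolding cohom_eq_pointwise_FactGroup
  proof (rule pointwise_FactGroup_iso[where \<Phi> = \<Phi>])
    show "additive_subgroup (cycles G r i j)" "additive_subgroup (boundaries G r i j)"
      "additive_subgroup (boundaries G r2 i j)"
      by (rule additive_subgroup_cycles additive_subgroup_boundaries)+
    show "\<Phi> (\<lambda>S. x S + y S) = (\<lambda>S. \<Phi> x S + \<Phi> y S)" for x y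
      unfolding \<Phi>_def by (simp add: algebra_simps)
    show "\<Phi> ` cycles G r i j = cycles G r2 i j"
    proof (intro equalityI subsetI)
      fix x assume "x \<in> cycles G r2 i j"
      then show "x \<in> \<Phi> ` cycles G r i j"
        using cycles_\<Phi>' involution[of x] by (metis image_eqI)
    qed (use cycles_\<Phi> in blast)
    fix x
    show "\<Phi> x \<in> boundaries G r2 i j \<longleftrightarrow> x \<in> boundaries G r i j"
    proof
      assume "\<Phi> x \<in> boundaries G r2 i j"
      then obtain y where "y \<in> chains G (i - 1) j" "\<Phi> x = diff G r2 y"
        unfolding mem_boundaries_iff by blast
      then have "\<Phi> y \<in> chains G (i - 1) j" "x = diff G r (\<Phi> y)"
        using chains_\<Phi> involution[of x] diff_\<Phi>'[of y] by simp_all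
      then show "x \<in> boundaries G r i j" unfolding mem_boundaries_iff by blast
    next
      assume "x \<in> boundaries G r i j"
      then obtain y where "y \<in> chains G (i - 1) j" "x = diff G r y"
        unfolding mem_boundaries_iff by blast
      then have "\<Phi> y \<in> chains G (i - 1) j" "\<Phi> x = diff G r2 (\<Phi> y)"
        using chains_\<Phi> diff_\<Phi>[of y] by simp_all
      then show "\<Phi> x \<in> boundaries G r2 i j" unfolding mem_boundaries_iff by blast
    qed
  qed
qed

section \<open>Recolouring one component\<close>

definition recolour :: "('v, 'e) graph \<Rightarrow> 'v \<Rightarrow> bool \<Rightarrow> ('v, 'e) estate \<Rightarrow> ('v, 'e) estate" where
  "recolour H x0 b S = (fst S, (snd S)(comp_of H (fst S) x0 := b))"

lemma fst_recolour [simp]: "fst (recolour H x0 b S) = fst S"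
  by (simp add: recolour_def)

lemma recolour_in_states: "S \<in> states H \<Longrightarrow> x0 \<in> verts H \<Longrightarrow> recolour H x0 b S \<in> states H"
  using comp_of_in_comps[of x0 H "fst S"] unfolding states_def recolour_def by auto

lemma colour_recolour:
  "x \<in> verts H \<Longrightarrow> x0 \<in> verts H \<Longrightarrow>
    colour H (recolour H x0 b S) x = (if (x, x0) \<in> conn_rel H (fst S) then b else colour H S x)"
  unfolding colour_def recolour_def using comp_of_eq_iff[of x H x0 "fst S"] by auto

lemma colour_recolour_self: "x0 \<in> verts H \<Longrightarrow> colour H (recolour H x0 b S) x0 = b"
  using colour_recolour[of x0 H x0 b S] conn_rel_refl[of x0 H] by simp

lemma recolour_recolour [simp]: "recolour H x0 b (recolour H x0 b' S) = recolour H x0 b S"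
  by (simp add: recolour_def)

lemma recolour_colour: "colour H S x0 = b \<Longrightarrow> recolour H x0 b S = S"
  unfolding recolour_def colour_def by (auto simp: prod_eq_iff)

lemma jdeg_uncolour:
  assumes "finite (verts H)" and x0: "x0 \<in> verts H" and "colour H S x0"
  shows "jdeg H S = jdeg H (recolour H x0 False S) + 1"
proof -
  let ?Q = "comp_of H (fst S) x0"
  let ?C = "{Q \<in> comps H (fst S). ((snd S)(?Q := False)) Q}"
  have "{Q \<in> comps H (fst S). snd S Q} = insert ?Q ?C"
    using assms comp_of_in_comps[OF x0] unfolding colour_def by auto
  moreover have "?Q \<notin> ?C" "finite ?C"
    using finite_comps[OF assms(1)] by simp_all
  ultimately show ?thesis unfolding jdeg_def recolour_def by simp
qed

lemma add_edge_None_if_joins_coloured: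
  assumes wf: "wf_graph H" and e': "e' \<in> edges H"
    and u: "u \<in> ends H e'" "u' \<in> ends H e'" "(u, u') \<notin> conn_rel H (fst S)"
    and coloured: "colour H S u" "colour H S u'"
  shows "add_edge H S e' = None"
proof -
  have "u \<in> verts H"
    using u(1) wf_graph_ends_subset[OF wf e'] by blast
  then have "u \<noteq> u'"
    using u(3) conn_rel_refl[of u H "fst S"] by auto
  then have "w = u \<or> w = u'" if "w \<in> ends H e'" for w
    using wf_graph_ends_not_distinct[OF wf e' u(1,2) that] by blast
  then have "\<forall>w\<in>ends H e'. colour H S w"
    using coloured by blast
  then show ?thesis
    unfolding add_edge_eq_None_iff[OF wf e'] using u by blast
qed

lemma add_edge_keeps_colour:
  assumes wf: "wf_graph H" and x: "x \<in> verts H" and S: "S \<in> states H" and e': "e' \<in> edges H"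
    and coloured: "colour H S x" and T: "add_edge H S e' = Some T"
  shows "colour H T x"
proof (cases "touch H (fst S) e' x")
  case True
  then obtain u where "u \<in> ends H e'" "(x, u) \<in> conn_rel H (fst S)" unfolding touch_def by blast
  then show ?thesis
    using add_edge_SomeD[OF wf e' S T] x coloured colour_conn_rel[of x u H S] by auto
next
  case False
  then show ?thesis using add_edge_SomeD[OF wf e' S T] x coloured by auto
qed

text \<open>Uncolouring the component of \<open>x0\<close> commutes with adding an edge, provided that the
  component is coloured \<open>x\<close>: uncolouring cannot create a product \<open>x * x\<close>.\<close>

lemma colour_uncolour_add_edge:
  assumes wf: "wf_graph H" and x0: "x0 \<in> verts H" and S: "S \<in> states H" and e': "e' \<in> edges H"
    and coloured: "colour H S x0" and T: "add_edge H S e' = Some T" and x: "x \<in> verts H"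
  shows "colour H (recolour H x0 False T) x =
    (if touch H (fst S) e' x then \<exists>u\<in>ends H e'. colour H (recolour H x0 False S) u
     else colour H (recolour H x0 False S) x)"
proof -
  let ?s = "fst S" and ?E = "ends H e'" and ?V = "colour H S"
  let ?K = "\<lambda>x. (x, x0) \<in> conn_rel H ?s" and ?t = "touch H ?s e'"
  let ?S0 = "recolour H x0 False S"
  have fst_T: "fst T = insert e' ?s"
    and colour_T: "colour H T x = (if ?t x then \<exists>u\<in>?E. ?V u else ?V x)"
    using add_edge_SomeD[OF wf e' S T] x by auto
  have EV: "?E \<subseteq> verts H" using wf_graph_ends_subset[OF wf e'] .
  have colour_S0_ends: "colour H ?S0 u = (\<not> ?K u \<and> ?V u)" if "u \<in> ?E" for u
    using colour_recolour[OF subsetD[OF EV that] x0] by simp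
  have K_insert: "(x, x0) \<in> conn_rel H (insert e' ?s) \<longleftrightarrow> ?K x \<or> (?t x \<and> ?t x0)"
    using conn_rel_insert[OF wf e' states_edges[OF S]] by blast
  have K_touch: "?t x0" if "?K y" "?t y" for y
    using touch_conn_rel[OF that(2) conn_rel_sym[OF that(1)]] .
  show ?thesis
  proof (cases "?t x")
    case False
    then show ?thesis using colour_recolour[OF x x0] fst_T K_insert colour_T by simp
  next
    case tx: True
    show ?thesis
    proof (cases "?t x0")
      case True
      have "\<not> (\<exists>u\<in>?E. \<not> ?K u \<and> ?V u)"
      proof
        assume "\<exists>u\<in>?E. \<not> ?K u \<and> ?V u"
        then obtain u where u: "u \<in> ?E" "\<not> ?K u" "?V u" by blast
        obtain u0 where u0: "u0 \<in> ?E" "(x0, u0) \<in> conn_rel H ?s"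
          using True unfolding touch_def by blast
        have "(u0, u) \<notin> conn_rel H ?s"
        proof
          assume "(u0, u) \<in> conn_rel H ?s"
          then have "?K u" using conn_rel_sym[OF conn_rel_trans[OF u0(2)]] by blast
          then show False using u(2) by blast
        qed
        moreover have "?V u0" using coloured colour_conn_rel[OF u0(2)] by simp
        ultimately have "add_edge H S e' = None"
          using add_edge_None_if_joins_coloured[OF wf e' u0(1) u(1)] u(3) by blast
        then show False using T by simp
      qed
      then have "\<not> (\<exists>u\<in>?E. colour H ?S0 u)"
        by (simp add: colour_S0_ends)
      moreover have "\<not> colour H (recolour H x0 False T) x"
        using colour_recolour[OF x x0] fst_T K_insert tx True by simp
      ultimately show ?thesis using tx by simp
    next
      case False
      have not_Kx: "\<not> ?K x"
        using K_touch[of x] tx False by blast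
      have "\<not> ?K u" if "u \<in> ?E" for u
        using K_touch[of u] touch_end[OF that subsetD[OF EV that]] False by blast
      then have "(\<exists>u\<in>?E. colour H ?S0 u) = (\<exists>u\<in>?E. ?V u)"
        by (simp add: colour_S0_ends)
      moreover have "colour H (recolour H x0 False T) x = colour H T x"
        using colour_recolour[OF x x0] fst_T K_insert not_Kx False by simp
      ultimately show ?thesis using tx colour_T by simp
    qed
  qed
qed

lemma add_edge_uncolour:
  assumes wf: "wf_graph H" and x0: "x0 \<in> verts H" and S: "S \<in> states H" and e': "e' \<in> edges H"
    and coloured: "colour H S x0" and T: "add_edge H S e' = Some T"
  shows "add_edge H (recolour H x0 False S) e' = Some (recolour H x0 False T)"
proof -
  let ?E = "ends H e'" and ?S0 = "recolour H x0 False S"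
  have T_states: "T \<in> states H" and fst_T: "fst T = insert e' (fst S)"
    using add_edge_SomeD[OF wf e' S T] by auto
  have not_None: "\<not> ((\<exists>p\<in>?E. \<exists>q\<in>?E. (p, q) \<notin> conn_rel H (fst S)) \<and> (\<forall>u\<in>?E. colour H S u))"
    using add_edge_eq_None_iff[OF wf e', of S] T by auto
  have weaker: "colour H ?S0 u \<Longrightarrow> colour H S u" if "u \<in> ?E" for u
    using colour_recolour[OF subsetD[OF wf_graph_ends_subset[OF wf e'] that] x0]
    by (auto split: if_splits)
  show ?thesis
    unfolding add_edge_eq_Some_iff[OF wf e' recolour_in_states[OF S x0] recolour_in_states[OF T_states x0]]
      fst_recolour
  proof (intro conjI ballI)
    show "fst T = insert e' (fst S)" by (rule fst_T)
    show "\<not> ((\<exists>p\<in>?E. \<exists>q\<in>?E. (p, q) \<notin> conn_rel H (fst S)) \<and> (\<forall>u\<in>?E. colour H ?S0 u))"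
      using not_None weaker by blast
  next
    fix x assume "x \<in> verts H"
    then show "colour H (recolour H x0 False T) x =
      (if touch H (fst S) e' x then \<exists>u\<in>?E. colour H ?S0 u else colour H ?S0 x)"
      by (rule colour_uncolour_add_edge[OF assms])
  qed
qed

lemma colour_recolour_add_edge:
  assumes wf: "wf_graph H" and x0: "x0 \<in> verts H" and S: "S \<in> states H" and e': "e' \<in> edges H"
    and coloured: "colour H S x0"
    and Y: "add_edge H (recolour H x0 False S) e' = Some Y" and uncoloured: "\<not> colour H Y x0"
    and x: "x \<in> verts H"
  shows "colour H (recolour H x0 True Y) x =
    (if touch H (fst S) e' x then \<exists>u\<in>ends H e'. colour H S u else colour H S x)"
proof -
  let ?s = "fst S" and ?E = "ends H e'" and ?V = "colour H S"
  let ?K = "\<lambda>x. (x, x0) \<in> conn_rel H ?s" and ?t = "touch H ?s e'"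
  let ?S0 = "recolour H x0 False S"
  have fst_Y: "fst Y = insert e' ?s"
    and colour_Y: "colour H Y x = (if ?t x then \<exists>u\<in>?E. colour H ?S0 u else colour H ?S0 x)"
    using add_edge_SomeD[OF wf e' recolour_in_states[OF S x0] Y] x by auto
  have EV: "?E \<subseteq> verts H" using wf_graph_ends_subset[OF wf e'] .
  have colour_S0: "colour H ?S0 y = (\<not> ?K y \<and> ?V y)" if "y \<in> verts H" for y
    using colour_recolour[OF that x0] by simp
  have K_insert: "(x, x0) \<in> conn_rel H (insert e' ?s) \<longleftrightarrow> ?K x \<or> (?t x \<and> ?t x0)"
    using conn_rel_insert[OF wf e' states_edges[OF S]] by blast
  have K_touch: "?t x0" if "?K y" "?t y" for y
    using touch_conn_rel[OF that(2) conn_rel_sym[OF that(1)]] .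
  have K_coloured: "?V y" if "?K y" for y
    using coloured colour_conn_rel[OF that] by simp
  show ?thesis
  proof (cases "?t x")
    case False
    then have "colour H (recolour H x0 True Y) x = (?K x \<or> ?V x)"
      using colour_recolour[OF x x0] fst_Y K_insert colour_Y colour_S0[OF x] by simp
    then show ?thesis using False K_coloured[of x] by auto
  next
    case tx: True
    show ?thesis
    proof (cases "?t x0")
      case True
      then obtain u0 where u0: "u0 \<in> ?E" "(x0, u0) \<in> conn_rel H ?s" unfolding touch_def by blast
      then have "\<exists>u\<in>?E. ?V u" using K_coloured[OF conn_rel_sym[OF u0(2)]] by blast
      then show ?thesis using tx True colour_recolour[OF x x0] fst_Y K_insert by simp
    next
      case False
      have not_Kx: "\<not> ?K x"
        using K_touch[of x] tx False by blast
      have "\<not> ?K u" if "u \<in> ?E" for u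
        using K_touch[of u] touch_end[OF that subsetD[OF EV that]] False by blast
      then have "(\<exists>u\<in>?E. colour H ?S0 u) = (\<exists>u\<in>?E. ?V u)"
        using colour_S0 EV by auto
      moreover have "colour H (recolour H x0 True Y) x = colour H Y x"
        using colour_recolour[OF x x0] fst_Y K_insert not_Kx False by simp
      ultimately show ?thesis using tx colour_Y by simp
    qed
  qed
qed

lemma add_edge_recolour:
  assumes wf: "wf_graph H" and x0: "x0 \<in> verts H" and S: "S \<in> states H" and e': "e' \<in> edges H"
    and coloured: "colour H S x0"
    and Y: "add_edge H (recolour H x0 False S) e' = Some Y" and uncoloured: "\<not> colour H Y x0"
  shows "add_edge H S e' = Some (recolour H x0 True Y)"
proof -
  let ?s = "fst S" and ?E = "ends H e'" and ?V = "colour H S"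
  let ?K = "\<lambda>x. (x, x0) \<in> conn_rel H ?s" and ?S0 = "recolour H x0 False S"
  have Y_states: "Y \<in> states H" and fst_Y: "fst Y = insert e' ?s"
    using add_edge_SomeD[OF wf e' recolour_in_states[OF S x0] Y] by auto
  have EV: "?E \<subseteq> verts H" using wf_graph_ends_subset[OF wf e'] .
  have not_None: "\<not> ((\<exists>p\<in>?E. \<exists>q\<in>?E. (p, q) \<notin> conn_rel H ?s) \<and> (\<forall>u\<in>?E. colour H ?S0 u))"
    using add_edge_eq_None_iff[OF wf e', of ?S0] Y by auto
  have "\<not> ((\<exists>p\<in>?E. \<exists>q\<in>?E. (p, q) \<notin> conn_rel H ?s) \<and> (\<forall>u\<in>?E. ?V u))"
  proof
    assume A: "(\<exists>p\<in>?E. \<exists>q\<in>?E. (p, q) \<notin> conn_rel H ?s) \<and> (\<forall>u\<in>?E. ?V u)"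
    then obtain p q where pq: "p \<in> ?E" "q \<in> ?E" "(p, q) \<notin> conn_rel H ?s" by blast
    show False
    proof (cases "\<forall>u\<in>?E. \<not> ?K u")
      case True
      then have "\<forall>u\<in>?E. colour H ?S0 u"
        using A colour_recolour[OF subsetD[OF EV] x0] by simp
      then show False using not_None A by blast
    next
      case False
      then obtain u0 where u0: "u0 \<in> ?E" "?K u0" by blast
      then have "touch H ?s e' x0"
        unfolding touch_def using conn_rel_sym[OF u0(2)] by blast
      then have "colour H Y x0 = (\<exists>u\<in>?E. colour H ?S0 u)"
        using add_edge_SomeD[OF wf e' recolour_in_states[OF S x0] Y] x0 by simp
      then have S0_uncoloured: "\<not> colour H ?S0 u" if "u \<in> ?E" for u
        using uncoloured that by blast
      have K_ends: "?K u" if "u \<in> ?E" for u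
      proof (rule ccontr)
        assume "\<not> ?K u"
        then have "colour H ?S0 u = ?V u"
          using colour_recolour[OF subsetD[OF EV that] x0, of False S] by simp
        then show False using S0_uncoloured[OF that] A that by blast
      qed
      have "(p, q) \<in> conn_rel H ?s"
        using conn_rel_trans[OF K_ends[OF pq(1)] conn_rel_sym[OF K_ends[OF pq(2)]]] .
      then show False using pq(3) by blast
    qed
  qed
  then show ?thesis
    unfolding add_edge_eq_Some_iff[OF wf e' S recolour_in_states[OF Y_states x0]] fst_recolour
    using fst_Y colour_recolour_add_edge[OF assms] by simp
qed
lemma add_edge_uncolour_iff:
  assumes wf: "wf_graph H" and x0: "x0 \<in> verts H" and S: "S \<in> states H" and e': "e' \<in> edges H"
    and "colour H S x0" "colour H T x0"
  shows "add_edge H (recolour H x0 False S) e' = Some (recolour H x0 False T) \<longleftrightarrow>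
    add_edge H S e' = Some T"
proof
  assume "add_edge H (recolour H x0 False S) e' = Some (recolour H x0 False T)"
  moreover have "\<not> colour H (recolour H x0 False T) x0"
    using colour_recolour_self[OF x0] by simp
  ultimately have "add_edge H S e' = Some (recolour H x0 True (recolour H x0 False T))"
    by (rule add_edge_recolour[OF assms(1-5)])
  then show "add_edge H S e' = Some T"
    using recolour_colour[of H T x0 True] assms(6) by simp
qed (rule add_edge_uncolour[OF assms(1-5)])

definition pullback_uncolour :: "('v, 'e) graph \<Rightarrow> 'v \<Rightarrow> ('v, 'e) chain \<Rightarrow> ('v, 'e) chain" where
  "pullback_uncolour H x0 \<psi> S = (if colour H S x0 then \<psi> (recolour H x0 False S) else 0)"

lemma diff_pullback_uncolour:
  assumes wf: "wf_graph H" and x0: "x0 \<in> verts H"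
  shows "diff H r (pullback_uncolour H x0 \<psi>) T = pullback_uncolour H x0 (diff H r \<psi>) T"
proof -
  let ?U = "recolour H x0 False" and ?V = "\<lambda>S. colour H S x0"
  let ?A = "{S \<in> states H. ?V S}" and ?B = "{S \<in> states H. \<not> ?V S}"
  have fin: "finite (states H)" using finite_states[OF wf] .
  have "diff H r (pullback_uncolour H x0 \<psi>) T =
      (\<Sum>S\<in>states H. if ?V S then diff_contrib H r (pullback_uncolour H x0 \<psi>) T S else 0)"
    unfolding diff_eq_sum_contrib
    by (intro sum.cong refl) (simp add: diff_contrib_0 pullback_uncolour_def)
  also have "\<dots> = (\<Sum>S\<in>?A. diff_contrib H r (pullback_uncolour H x0 \<psi>) T S)"
    by (simp add: sum.inter_filter[OF fin])
  finally have lhs: "diff H r (pullback_uncolour H x0 \<psi>) T =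
      (\<Sum>S\<in>?A. diff_contrib H r (pullback_uncolour H x0 \<psi>) T S)" .
  have contrib_coloured: "diff_contrib H r \<phi> T' S = 0" if "S \<in> ?A" "\<not> ?V T'" for S T' \<phi>
    unfolding diff_contrib_def using add_edge_keeps_colour[OF wf x0, of S _ T'] that
    by (intro sum.neutral) auto
  show ?thesis
  proof (cases "?V T")
    case False
    then show ?thesis
      using lhs contrib_coloured by (simp add: pullback_uncolour_def)
  next
    case True
    have UT: "\<not> ?V (?U T)" using colour_recolour_self[OF x0] by simp
    have "diff H r \<psi> (?U T) = (\<Sum>R\<in>states H. if \<not> ?V R then diff_contrib H r \<psi> (?U T) R else 0)"
      unfolding diff_eq_sum_contrib using contrib_coloured[OF _ UT] by (intro sum.cong) auto
    also have "\<dots> = (\<Sum>R\<in>?B. diff_contrib H r \<psi> (?U T) R)"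
      by (simp add: sum.inter_filter[OF fin])
    also have "\<dots> = (\<Sum>S\<in>?A. diff_contrib H r (pullback_uncolour H x0 \<psi>) T S)"
    proof (rule sym, rule sum.reindex_bij_witness[where i = "recolour H x0 True" and j = ?U])
      fix S assume S: "S \<in> ?A"
      show "recolour H x0 True (?U S) = S" using recolour_colour[of H S x0 True] S by simp
      show "?U S \<in> ?B" using S recolour_in_states[OF _ x0] colour_recolour_self[OF x0] by auto
      have "add_edge H (?U S) e' = Some (?U T) \<longleftrightarrow> add_edge H S e' = Some T"
        if "e' \<in> edges H - fst S" for e'
        using add_edge_uncolour_iff[OF wf x0] S True that by blast
      then show "diff_contrib H r \<psi> (?U T) (?U S) = diff_contrib H r (pullback_uncolour H x0 \<psi>) T S"
        unfolding diff_contrib_def fst_recolour using S by (intro sum.cong) (auto simp: pullback_uncolour_def)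
    next
      fix R assume R: "R \<in> ?B"
      show "?U (recolour H x0 True R) = R" using recolour_colour[of H R x0 False] R by simp
      show "recolour H x0 True R \<in> ?A" using R recolour_in_states[OF _ x0] colour_recolour_self[OF x0] by auto
    qed
    finally show ?thesis using lhs True by (simp add: pullback_uncolour_def)
  qed
qed

section \<open>Contraction of an edge\<close>

lemma verts_contract [simp]: "verts (contract G e) = vclass G e ` verts G"
  and edges_contract [simp]: "edges (contract G e) = edges G - {e}"
  and ends_contract [simp]: "ends (contract G e) f = vclass G e ` ends G f"
  by (simp_all add: contract_def)

lemma vclass_eq_iff:
  "vclass G e x = vclass G e y \<longleftrightarrow> x = y \<or> (x \<in> ends G e \<and> y \<in> ends G e)"
  unfolding vclass_def by auto

lemma wf_graph_contract:
  assumes wf: "wf_graph G"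
  shows "wf_graph (contract G e)"
  unfolding wf_graph_def
proof (intro conjI ballI)
  show "finite (verts (contract G e))" "finite (edges (contract G e))"
    using wf_graph_finite[OF wf] by auto
next
  fix f assume "f \<in> edges (contract G e)"
  then have f: "f \<in> edges G" by simp
  show "ends (contract G e) f \<subseteq> verts (contract G e)"
    using wf_graph_ends_subset[OF wf f] by auto
  show "1 \<le> card (ends (contract G e) f)"
    using wf_graph_ends_nonempty[OF wf f] wf_graph_finite_ends[OF wf f]
    by (simp add: card_gt_0_iff Suc_le_eq)
  have "card (ends (contract G e) f) \<le> card (ends G f)"
    using wf_graph_finite_ends[OF wf f] by (simp add: card_image_le)
  also have "\<dots> \<le> 2" using wf f by (auto simp: wf_graph_def)
  finally show "card (ends (contract G e) f) \<le> 2" .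
qed

lemma conn_rel_contract:
  assumes wf: "wf_graph G" and s: "s \<subseteq> edges G" and xy: "(x, y) \<in> conn_rel G s"
  shows "(vclass G e x, vclass G e y) \<in> conn_rel (contract G e) (s - {e})"
proof -
  have x: "x \<in> verts G" and path: "(adj_in G s)\<^sup>*\<^sup>* x y"
    using xy by (auto simp: conn_rel_def)
  from path have "y \<in> verts G \<and> (vclass G e x, vclass G e y) \<in> conn_rel (contract G e) (s - {e})"
  proof (induction rule: rtranclp_induct)
    case (step y z)
    from step(2) obtain f where f: "f \<in> s" "y \<in> ends G f" "z \<in> ends G f"
      by (auto simp: adj_in_def)
    have "f \<in> edges G" using f(1) s by blast
    then have z: "z \<in> verts G" using wf_graph_ends_subset[OF wf] f(3) by blast
    have y: "y \<in> verts G" using step.IH by blast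
    show ?case
    proof (cases "f = e")
      case True
      then have "vclass G e y = vclass G e z" using f by (simp add: vclass_eq_iff)
      then show ?thesis using step.IH z by simp
    next
      case False
      then have "(vclass G e y, vclass G e z) \<in> conn_rel (contract G e) (s - {e})"
        using f y z by (intro conn_rel_edge[of f]) auto
      then show ?thesis using z conn_rel_trans[OF conjunct2[OF step.IH]] by blast
    qed
  qed (use x conn_rel_refl[of "vclass G e x" "contract G e"] in simp)
  then show ?thesis by simp
qed

lemma vclass_eq_conn_rel:
  assumes wf: "wf_graph G" and e: "e \<in> edges G" and "e \<in> s"
    and "a \<in> verts G" "b \<in> verts G" "vclass G e a = vclass G e b"
  shows "(a, b) \<in> conn_rel G s"
proof -
  have "a = b \<or> (a \<in> ends G e \<and> b \<in> ends G e)"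
    using assms(6) by (simp add: vclass_eq_iff)
  then show ?thesis
    using conn_rel_refl[OF assms(4)] conn_rel_edge[OF assms(3) _ _ assms(4,5)] by blast
qed

lemma contract_path_lift:
  assumes wf: "wf_graph G" and e: "e \<in> edges G" and s': "s' \<subseteq> edges G - {e}"
    and path: "(adj_in (contract G e) s')\<^sup>*\<^sup>* X Y" and x: "x \<in> verts G" "X = vclass G e x"
  shows "\<exists>y\<in>verts G. Y = vclass G e y \<and> (x, y) \<in> conn_rel G (insert e s')"
  using path
proof (induction rule: rtranclp_induct)
  case base
  then show ?case using x conn_rel_refl[OF x(1), of "insert e s'"] by blast
next
  case (step Y Z)
  from step.IH obtain y where y: "y \<in> verts G" "Y = vclass G e y" "(x, y) \<in> conn_rel G (insert e s')"
    by blast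
  from step(2) obtain f a b where f: "f \<in> s'" and ab: "a \<in> ends G f" "b \<in> ends G f"
    "Y = vclass G e a" "Z = vclass G e b"
    by (auto simp: adj_in_def)
  have "f \<in> edges G" using f s' by blast
  then have a: "a \<in> verts G" and b: "b \<in> verts G"
    using wf_graph_ends_subset[OF wf] ab(1,2) by blast+
  have ya: "(y, a) \<in> conn_rel G (insert e s')"
    using vclass_eq_conn_rel[OF wf e _ y(1) a] y(2) ab(3) by simp
  have ab': "(a, b) \<in> conn_rel G (insert e s')"
    using f ab a b by (intro conn_rel_edge[of f]) auto
  show ?case
    using conn_rel_trans[OF conn_rel_trans[OF y(3) ya] ab'] b ab(4) by blast
qed

lemma conn_rel_insert_contracted:
  assumes wf: "wf_graph G" and e: "e \<in> edges G" and s': "s' \<subseteq> edges G - {e}"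
    and x: "x \<in> verts G" and y: "y \<in> verts G"
  shows "(x, y) \<in> conn_rel G (insert e s') \<longleftrightarrow>
    (vclass G e x, vclass G e y) \<in> conn_rel (contract G e) s'"
proof
  assume xy: "(x, y) \<in> conn_rel G (insert e s')"
  have "insert e s' \<subseteq> edges G" "insert e s' - {e} = s'" using s' e by auto
  then show "(vclass G e x, vclass G e y) \<in> conn_rel (contract G e) s'"
    using conn_rel_contract[OF wf _ xy, of e] by simp
next
  assume "(vclass G e x, vclass G e y) \<in> conn_rel (contract G e) s'"
  then have "(adj_in (contract G e) s')\<^sup>*\<^sup>* (vclass G e x) (vclass G e y)"
    by (simp add: conn_rel_def)
  from contract_path_lift[OF wf e s' this x refl]
  obtain y' where y': "y' \<in> verts G" "vclass G e y = vclass G e y'"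
    and xy': "(x, y') \<in> conn_rel G (insert e s')"
    by auto
  have "(y', y) \<in> conn_rel G (insert e s')"
    using vclass_eq_conn_rel[OF wf e _ y'(1) y] y'(2) by simp
  then show "(x, y) \<in> conn_rel G (insert e s')"
    by (rule conn_rel_trans[OF xy'])
qed

section \<open>A pendant edge\<close>

locale pendant =
  fixes G :: "('v, 'e) graph" and e :: 'e and v w :: 'v
  assumes wf: "wf_graph G" and e_edge: "e \<in> edges G" and ends_e: "ends G e = {v, w}"
    and v_ne_w: "v \<noteq> w" and only_e_at_v: "\<And>f. f \<in> edges G \<Longrightarrow> v \<in> ends G f \<Longrightarrow> f = e"
begin

abbreviation G' :: "('v set, 'e) graph" where "G' \<equiv> contract G e"

abbreviation vc :: "'v \<Rightarrow> 'v set" where "vc \<equiv> vclass G e"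

lemma v_verts: "v \<in> verts G" and w_verts: "w \<in> verts G"
  using wf_graph_ends_subset[OF wf e_edge] ends_e by auto

lemma vc_v_verts: "vc v \<in> verts G'"
  using v_verts by simp

lemma wf_contract: "wf_graph G'"
  using wf_graph_contract[OF wf] .

lemma vc_eq_iff: "vc x = vc y \<longleftrightarrow> x = y \<or> (x \<in> {v, w} \<and> y \<in> {v, w})"
  using vclass_eq_iff[of G e x y] ends_e by simp

lemma vc_v_eq_vc_w: "vc v = vc w"
  unfolding vc_eq_iff by simp

lemma vc_inj: "x \<noteq> v \<Longrightarrow> y \<noteq> v \<Longrightarrow> vc x = vc y \<Longrightarrow> x = y"
  unfolding vc_eq_iff by auto

lemma v_notin_ends: "f \<in> edges G \<Longrightarrow> f \<noteq> e \<Longrightarrow> v \<notin> ends G f"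
  using only_e_at_v by blast

lemma verts_contract_obtain:
  assumes "X \<in> verts G'"
  obtains x where "x \<in> verts G" "x \<noteq> v" "X = vc x"
  using assms w_verts v_ne_w vc_v_eq_vc_w by auto

lemma states_contract_edges: "S' \<in> states G' \<Longrightarrow> fst S' \<subseteq> edges G - {e}"
  using states_edges[of S' G'] by simp

lemma conn_rel_v_w: "e \<in> s \<Longrightarrow> (v, w) \<in> conn_rel G s"
  using conn_rel_edge[of e s v G w] ends_e v_verts w_verts by simp

lemma conn_rel_from_v:
  assumes s': "s' \<subseteq> edges G - {e}" and "(v, y) \<in> conn_rel G s'"
  shows "y = v"
proof -
  have "(adj_in G s')\<^sup>*\<^sup>* v y" using assms(2) by (simp add: conn_rel_def)
  then show ?thesis
  proof (induction rule: rtranclp_induct)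
    case (step y z)
    then obtain f where "f \<in> s'" "v \<in> ends G f" by (auto simp: adj_in_def)
    then show ?case using only_e_at_v[of f] s' by auto
  qed simp
qed

lemma conn_rel_to_v: "s' \<subseteq> edges G - {e} \<Longrightarrow> (y, v) \<in> conn_rel G s' \<Longrightarrow> y = v"
  using conn_rel_from_v conn_rel_sym by metis

lemma contract_path_avoiding_v:
  assumes s': "s' \<subseteq> edges G - {e}" and path: "(adj_in G' s')\<^sup>*\<^sup>* X Y"
    and x: "x \<in> verts G" "x \<noteq> v" "X = vc x"
  shows "\<exists>y\<in>verts G. y \<noteq> v \<and> Y = vc y \<and> (x, y) \<in> conn_rel G s'"
  using path
proof (induction rule: rtranclp_induct)
  case base
  then show ?case using x conn_rel_refl[OF x(1), of s'] by blast
next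
  case (step Y Z)
  from step.IH obtain y where y: "y \<in> verts G" "y \<noteq> v" "Y = vc y" "(x, y) \<in> conn_rel G s'"
    by blast
  from step(2) obtain f a b where f: "f \<in> s'" and ab: "a \<in> ends G f" "b \<in> ends G f"
    "Y = vc a" "Z = vc b"
    by (auto simp: adj_in_def)
  have "f \<in> edges G" "f \<noteq> e" using f s' by auto
  then have a: "a \<in> verts G" "a \<noteq> v" and b: "b \<in> verts G" "b \<noteq> v"
    using wf_graph_ends_subset[OF wf] v_notin_ends ab(1,2) by blast+
  have "a = y" using vc_inj[OF a(2) y(2)] y(3) ab(3) by simp
  moreover have "(a, b) \<in> conn_rel G s'"
    using f ab a b by (intro conn_rel_edge[of f]) auto
  ultimately show ?case
    using conn_rel_trans[OF y(4)] b ab(4) by blast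
qed

lemma conn_rel_contract_iff:
  assumes s': "s' \<subseteq> edges G - {e}"
    and x: "x \<in> verts G" "x \<noteq> v" and y: "y \<in> verts G" "y \<noteq> v"
  shows "(x, y) \<in> conn_rel G s' \<longleftrightarrow> (vc x, vc y) \<in> conn_rel G' s'"
proof
  assume xy: "(x, y) \<in> conn_rel G s'"
  have "s' \<subseteq> edges G" "s' - {e} = s'" using s' by auto
  then show "(vc x, vc y) \<in> conn_rel G' s'"
    using conn_rel_contract[OF wf _ xy, of e] by simp
next
  assume "(vc x, vc y) \<in> conn_rel G' s'"
  then have "(adj_in G' s')\<^sup>*\<^sup>* (vc x) (vc y)" by (simp add: conn_rel_def)
  from contract_path_avoiding_v[OF s' this x refl]
  obtain y' where "y' \<noteq> v" "vc y = vc y'" "(x, y') \<in> conn_rel G s'"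
    by auto
  then show "(x, y) \<in> conn_rel G s'" using vc_inj y(2) by blast
qed

lemma conn_rel_insert_e_iff:
  "s' \<subseteq> edges G - {e} \<Longrightarrow> x \<in> verts G \<Longrightarrow> y \<in> verts G \<Longrightarrow>
    (x, y) \<in> conn_rel G (insert e s') \<longleftrightarrow> (vc x, vc y) \<in> conn_rel G' s'"
  using conn_rel_insert_contracted[OF wf e_edge] .

text \<open>A state of \<open>G\<close> either contains \<open>e\<close>, and is then determined by its image in \<open>G/e\<close>,
  or it does not, and is then determined by its image together with the colour \<open>a\<close> of the
  isolated vertex \<open>v\<close>.\<close>

definition lift_joined :: "('v set, 'e) estate \<Rightarrow> ('v, 'e) estate" where
  "lift_joined S' = induced_state G (insert e (fst S')) (\<lambda>x. colour G' S' (vc x))"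

definition lift_isolated :: "bool \<Rightarrow> ('v set, 'e) estate \<Rightarrow> ('v, 'e) estate" where
  "lift_isolated a S' = induced_state G (fst S') (\<lambda>x. if x = v then a else colour G' S' (vc x))"

definition contract_state :: "('v, 'e) estate \<Rightarrow> ('v set, 'e) estate" where
  "contract_state S = induced_state G' (fst S - {e}) (\<lambda>X. \<exists>x\<in>verts G - {v}. vc x = X \<and> colour G S x)"

lemma lift_joined_in_states: "S' \<in> states G' \<Longrightarrow> lift_joined S' \<in> states G"
  unfolding lift_joined_def using states_contract_edges e_edge
  by (intro induced_state_in_states) blast

lemma fst_lift_joined: "fst (lift_joined S') = insert e (fst S')"
  by (simp add: lift_joined_def)

lemma colour_lift_joined:
  assumes S': "S' \<in> states G'" and x: "x \<in> verts G"
  shows "colour G (lift_joined S') x = colour G' S' (vc x)"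
  unfolding lift_joined_def
proof (rule colour_induced_state[OF x])
  fix y z assume yz: "(y, z) \<in> conn_rel G (insert e (fst S'))"
  then have "(vc y, vc z) \<in> conn_rel G' (fst S')"
    using conn_rel_insert_e_iff[OF states_contract_edges[OF S']] conn_rel_verts[OF yz] by blast
  then show "colour G' S' (vc y) = colour G' S' (vc z)" by (rule colour_conn_rel)
qed

lemma lift_isolated_in_states: "S' \<in> states G' \<Longrightarrow> lift_isolated a S' \<in> states G"
  unfolding lift_isolated_def using states_contract_edges
  by (intro induced_state_in_states) blast

lemma fst_lift_isolated: "fst (lift_isolated a S') = fst S'"
  by (simp add: lift_isolated_def)

lemma colour_lift_isolated:
  assumes S': "S' \<in> states G'" and x: "x \<in> verts G"
  shows "colour G (lift_isolated a S') x = (if x = v then a else colour G' S' (vc x))"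
  unfolding lift_isolated_def
proof (rule colour_induced_state[OF x])
  have s': "fst S' \<subseteq> edges G - {e}" using states_contract_edges[OF S'] .
  fix y z assume yz: "(y, z) \<in> conn_rel G (fst S')"
  show "(if y = v then a else colour G' S' (vc y)) = (if z = v then a else colour G' S' (vc z))"
  proof (cases "y = v")
    case True
    then show ?thesis using conn_rel_from_v[OF s'] yz by simp
  next
    case False
    moreover have "z \<noteq> v" using conn_rel_to_v[OF s'] yz False by blast
    ultimately have "(vc y, vc z) \<in> conn_rel G' (fst S')"
      using conn_rel_contract_iff[OF s'] yz conn_rel_verts[OF yz] by blast
    then show ?thesis using colour_conn_rel \<open>z \<noteq> v\<close> False by simp
  qed
qed

lemma colour_lift_isolated_v: "S' \<in> states G' \<Longrightarrow> colour G (lift_isolated a S') v = a"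
  using colour_lift_isolated[OF _ v_verts] by simp

lemma contract_state_in_states: "S \<in> states G \<Longrightarrow> contract_state S \<in> states G'"
  unfolding contract_state_def using states_edges
  by (intro induced_state_in_states) fastforce

lemma fst_contract_state: "fst (contract_state S) = fst S - {e}"
  by (simp add: contract_state_def)

lemma colour_contract_state:
  assumes S: "S \<in> states G" and x: "x \<in> verts G" "x \<noteq> v"
  shows "colour G' (contract_state S) (vc x) = colour G S x"
proof -
  have s': "fst S - {e} \<subseteq> edges G - {e}" using states_edges[OF S] by blast
  have witness: "(\<exists>y\<in>verts G - {v}. vc y = vc x \<and> colour G S y) = colour G S x"
    if x: "x \<in> verts G" "x \<noteq> v" for x
    using vc_inj x by blast
  have conn: "(x, y) \<in> conn_rel G (fst S)"
    if x: "x \<in> verts G" "x \<noteq> v" and y: "y \<in> verts G" "y \<noteq> v"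
      and xy: "(vc x, vc y) \<in> conn_rel G' (fst S - {e})" for x y
  proof (cases "e \<in> fst S")
    case True
    then have "insert e (fst S - {e}) = fst S" by auto
    then show ?thesis using conn_rel_insert_e_iff[OF s' x(1) y(1)] xy by simp
  next
    case False
    then have "fst S - {e} = fst S" by auto
    then show ?thesis using conn_rel_contract_iff[OF s' x y] xy by simp
  qed
  show ?thesis
    unfolding contract_state_def
  proof (subst colour_induced_state)
    show "vc x \<in> verts G'" using x by simp
    show "(\<exists>y\<in>verts G - {v}. vc y = vc x \<and> colour G S y) = colour G S x" using witness[OF x] .
    fix Y Z assume YZ: "(Y, Z) \<in> conn_rel G' (fst S - {e})"
    obtain y z where y: "y \<in> verts G" "y \<noteq> v" "Y = vc y" and z: "z \<in> verts G" "z \<noteq> v" "Z = vc z"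
      using conn_rel_verts[OF YZ] verts_contract_obtain by metis
    then have "colour G S y = colour G S z"
      using conn[OF y(1,2) z(1,2)] YZ colour_conn_rel by simp
    then show "(\<exists>x\<in>verts G - {v}. vc x = Y \<and> colour G S x) = (\<exists>x\<in>verts G - {v}. vc x = Z \<and> colour G S x)"
      using witness[OF y(1,2)] witness[OF z(1,2)] y(3) z(3) by simp
  qed
qed

lemma contract_state_lift_joined:
  assumes S': "S' \<in> states G'"
  shows "contract_state (lift_joined S') = S'"
proof (rule states_eqI[OF contract_state_in_states[OF lift_joined_in_states[OF S']] S'])
  show "fst (contract_state (lift_joined S')) = fst S'"
    using states_contract_edges[OF S'] by (auto simp: fst_contract_state fst_lift_joined)
  fix X assume "X \<in> verts G'"
  then obtain x where "x \<in> verts G" "x \<noteq> v" "X = vc x" by (rule verts_contract_obtain)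
  then show "colour G' (contract_state (lift_joined S')) X = colour G' S' X"
    using colour_contract_state[OF lift_joined_in_states[OF S']] colour_lift_joined[OF S'] by simp
qed

lemma contract_state_lift_isolated:
  assumes S': "S' \<in> states G'"
  shows "contract_state (lift_isolated a S') = S'"
proof (rule states_eqI[OF contract_state_in_states[OF lift_isolated_in_states[OF S']] S'])
  show "fst (contract_state (lift_isolated a S')) = fst S'"
    using states_contract_edges[OF S'] by (auto simp: fst_contract_state fst_lift_isolated)
  fix X assume "X \<in> verts G'"
  then obtain x where "x \<in> verts G" "x \<noteq> v" "X = vc x" by (rule verts_contract_obtain)
  then show "colour G' (contract_state (lift_isolated a S')) X = colour G' S' X"
    using colour_contract_state[OF lift_isolated_in_states[OF S']] colour_lift_isolated[OF S'] by simp
qed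

lemma lift_joined_contract_state:
  assumes S: "S \<in> states G" and eS: "e \<in> fst S"
  shows "lift_joined (contract_state S) = S"
proof (rule states_eqI[OF lift_joined_in_states[OF contract_state_in_states[OF S]] S])
  show "fst (lift_joined (contract_state S)) = fst S"
    using eS by (auto simp: fst_lift_joined fst_contract_state)
  fix x assume x: "x \<in> verts G"
  have "colour G (lift_joined (contract_state S)) x = colour G' (contract_state S) (vc x)"
    using colour_lift_joined[OF contract_state_in_states[OF S] x] .
  moreover have "colour G S v = colour G S w"
    using colour_conn_rel[OF conn_rel_v_w[OF eS]] .
  ultimately show "colour G (lift_joined (contract_state S)) x = colour G S x"
    using colour_contract_state[OF S] x w_verts v_ne_w vc_v_eq_vc_w by (cases "x = v") auto
qed

lemma lift_isolated_contract_state: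
  assumes S: "S \<in> states G" and eS: "e \<notin> fst S"
  shows "lift_isolated (colour G S v) (contract_state S) = S"
proof (rule states_eqI[OF lift_isolated_in_states[OF contract_state_in_states[OF S]] S])
  show "fst (lift_isolated (colour G S v) (contract_state S)) = fst S"
    using eS by (auto simp: fst_lift_isolated fst_contract_state)
  fix x assume "x \<in> verts G"
  then show "colour G (lift_isolated (colour G S v) (contract_state S)) x = colour G S x"
    using colour_lift_isolated[OF contract_state_in_states[OF S]] colour_contract_state[OF S] by auto
qed

lemma lift_isolated_eq_iff:
  assumes "S1 \<in> states G'" "S2 \<in> states G'"
  shows "lift_isolated a S1 = lift_isolated b S2 \<longleftrightarrow> a = b \<and> S1 = S2"
proof
  assume eq: "lift_isolated a S1 = lift_isolated b S2"
  then have "S1 = S2"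
    using contract_state_lift_isolated[OF assms(1), of a] contract_state_lift_isolated[OF assms(2), of b]
    by simp
  moreover have "a = b"
    using colour_lift_isolated_v[OF assms(1), of a] colour_lift_isolated_v[OF assms(2), of b] eq by simp
  ultimately show "a = b \<and> S1 = S2" by simp
qed simp

lemma lift_joined_eq_iff:
  assumes "S1 \<in> states G'" "S2 \<in> states G'"
  shows "lift_joined S1 = lift_joined S2 \<longleftrightarrow> S1 = S2"
  using contract_state_lift_joined[OF assms(1)] contract_state_lift_joined[OF assms(2)] by metis

lemma lift_isolated_ne_lift_joined: "S1 \<in> states G' \<Longrightarrow> lift_isolated a S1 \<noteq> lift_joined S2"
  using states_contract_edges[of S1] fst_lift_isolated[of a S1] fst_lift_joined[of S2] by auto

lemma states_decompose:
  "states G = lift_isolated True ` states G' \<union> lift_isolated False ` states G' \<union> lift_joined ` states G'"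
proof (intro equalityI subsetI)
  fix S assume S: "S \<in> states G"
  show "S \<in> lift_isolated True ` states G' \<union> lift_isolated False ` states G' \<union> lift_joined ` states G'"
  proof (cases "e \<in> fst S")
    case True
    then show ?thesis
      using lift_joined_contract_state[OF S True] contract_state_in_states[OF S] by (metis UnI2 image_eqI)
  next
    case False
    then have "S = lift_isolated (colour G S v) (contract_state S)"
      using lift_isolated_contract_state[OF S] by simp
    then show ?thesis using contract_state_in_states[OF S] by (cases "colour G S v") auto
  qed
qed (use lift_isolated_in_states lift_joined_in_states in blast)

lemma states_cases:
  assumes "T \<in> states G"
  obtains (coloured) T' where "T' \<in> states G'" "T = lift_isolated True T'"
    | (uncoloured) T' where "T' \<in> states G'" "T = lift_isolated False T'"
    | (joined) T' where "T' \<in> states G'" "T = lift_joined T'"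
  using assms states_decompose by blast

lemma sum_states_decompose:
  fixes g :: "('v, 'e) estate \<Rightarrow> int"
  shows "(\<Sum>S\<in>states G. g S) = (\<Sum>S'\<in>states G'. g (lift_isolated True S')) +
    (\<Sum>S'\<in>states G'. g (lift_isolated False S')) + (\<Sum>S'\<in>states G'. g (lift_joined S'))"
proof -
  have fin: "finite (states G')" using finite_states[OF wf_contract] .
  have inj: "inj_on (lift_isolated a) (states G')" "inj_on lift_joined (states G')" for a
    using lift_isolated_eq_iff lift_joined_eq_iff by (auto simp: inj_on_def)
  have "lift_isolated True ` states G' \<inter> lift_isolated False ` states G' = {}"
    using lift_isolated_eq_iff by auto
  moreover have "(lift_isolated True ` states G' \<union> lift_isolated False ` states G') \<inter>
      lift_joined ` states G' = {}"
    using lift_isolated_ne_lift_joined by blast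
  ultimately show ?thesis
    unfolding states_decompose using fin
    by (simp add: sum.union_disjoint sum.reindex[OF inj(1)] sum.reindex[OF inj(2)])
qed

lemma card_comps_vc:
  assumes P: "P \<subseteq> verts G"
    and image: "\<And>x. x \<in> P \<Longrightarrow> vc ` comp_of G s x = comp_of G' s' (vc x)"
    and conn: "\<And>x y. x \<in> P \<Longrightarrow> y \<in> P \<Longrightarrow> (vc x, vc y) \<in> conn_rel G' s' \<Longrightarrow> (x, y) \<in> conn_rel G s"
  shows "card (comp_of G' s' ` vc ` P) = card (comp_of G s ` P)"
proof -
  have "comp_of G' s' ` vc ` P = (\<lambda>Q. vc ` Q) ` comp_of G s ` P"
    unfolding image_image using image by (intro image_cong) auto
  moreover have "inj_on (\<lambda>Q. vc ` Q) (comp_of G s ` P)"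
  proof (rule inj_onI)
    fix Q1 Q2 assume "Q1 \<in> comp_of G s ` P" "Q2 \<in> comp_of G s ` P" and eq: "vc ` Q1 = vc ` Q2"
    then obtain x1 x2 where x: "x1 \<in> P" "x2 \<in> P" "Q1 = comp_of G s x1" "Q2 = comp_of G s x2"
      by blast
    then have "comp_of G' s' (vc x1) = comp_of G' s' (vc x2)" using eq image by simp
    moreover have "x1 \<in> verts G" "x2 \<in> verts G" using x P by blast+
    ultimately have "(vc x1, vc x2) \<in> conn_rel G' s'"
      using comp_of_eq_iff[of "vc x1" G' "vc x2" s'] by simp
    then have "(x1, x2) \<in> conn_rel G s" using conn[OF x(1,2)] by blast
    then show "Q1 = Q2" using comp_of_eq_iff[of x1 G x2 s] x P by auto
  qed
  ultimately show ?thesis by (simp add: card_image)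
qed

lemma jdeg_lift_joined:
  assumes S': "S' \<in> states G'"
  shows "jdeg G (lift_joined S') = jdeg G' S'"
proof -
  let ?s = "fst S'" and ?P = "{x \<in> verts G. colour G' S' (vc x)}"
  have s': "?s \<subseteq> edges G - {e}" using states_contract_edges[OF S'] .
  have image: "vc ` comp_of G (insert e ?s) x = comp_of G' ?s (vc x)" if x: "x \<in> verts G" for x
  proof (intro equalityI subsetI)
    fix Y assume "Y \<in> vc ` comp_of G (insert e ?s) x"
    then obtain y where y: "(x, y) \<in> conn_rel G (insert e ?s)" "Y = vc y"
      by (auto simp: mem_comp_of)
    then show "Y \<in> comp_of G' ?s (vc x)"
      using conn_rel_insert_e_iff[OF s' x] conn_rel_verts[OF y(1)] by (simp add: mem_comp_of)
  next
    fix Y assume "Y \<in> comp_of G' ?s (vc x)"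
    then have xY: "(vc x, Y) \<in> conn_rel G' ?s" by (simp add: mem_comp_of)
    then obtain y where y: "y \<in> verts G" "Y = vc y"
      using conn_rel_verts[OF xY] by auto
    then show "Y \<in> vc ` comp_of G (insert e ?s) x"
      using conn_rel_insert_e_iff[OF s' x y(1)] xY by (auto simp: mem_comp_of)
  qed
  have coloured: "{x \<in> verts G. colour G (lift_joined S') x} = ?P"
    using colour_lift_joined[OF S'] by auto
  have coloured': "{X \<in> verts G'. colour G' S' X} = vc ` ?P"
    by auto
  have "jdeg G (lift_joined S') = int (card (comp_of G (insert e ?s) ` ?P))"
    using jdeg_eq_card_coloured[OF lift_joined_in_states[OF S']] coloured by (simp add: fst_lift_joined)
  also have "card (comp_of G (insert e ?s) ` ?P) = card (comp_of G' ?s ` vc ` ?P)"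
    using image conn_rel_insert_e_iff[OF s'] by (subst card_comps_vc) auto
  also have "int (card (comp_of G' ?s ` vc ` ?P)) = jdeg G' S'"
    using jdeg_eq_card_coloured[OF S'] coloured' by simp
  finally show ?thesis .
qed

lemma jdeg_lift_isolated:
  assumes S': "S' \<in> states G'"
  shows "jdeg G (lift_isolated a S') = jdeg G' S' + (if a then 1 else 0)"
proof -
  let ?s = "fst S'" and ?P = "{x \<in> verts G. x \<noteq> v \<and> colour G' S' (vc x)}"
  have s': "?s \<subseteq> edges G - {e}" using states_contract_edges[OF S'] .
  have image: "vc ` comp_of G ?s x = comp_of G' ?s (vc x)" if "x \<in> ?P" for x
  proof (intro equalityI subsetI)
    fix Y assume "Y \<in> vc ` comp_of G ?s x"
    then obtain y where y: "(x, y) \<in> conn_rel G ?s" "Y = vc y" by (auto simp: mem_comp_of)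
    then have "y \<noteq> v" using conn_rel_to_v[OF s'] that by blast
    then show "Y \<in> comp_of G' ?s (vc x)"
      using conn_rel_contract_iff[OF s'] conn_rel_verts[OF y(1)] y that by (auto simp: mem_comp_of)
  next
    fix Y assume "Y \<in> comp_of G' ?s (vc x)"
    then have xY: "(vc x, Y) \<in> conn_rel G' ?s" by (simp add: mem_comp_of)
    then obtain y where "y \<in> verts G" "y \<noteq> v" "Y = vc y"
      using conn_rel_verts[OF xY] verts_contract_obtain by metis
    then show "Y \<in> vc ` comp_of G ?s x"
      using conn_rel_contract_iff[OF s'] xY that by (auto simp: mem_comp_of)
  qed
  have comp_v: "comp_of G ?s v = {v}"
    using conn_rel_from_v[OF s'] conn_rel_refl[OF v_verts] by (auto simp: mem_comp_of)
  have coloured: "{x \<in> verts G. colour G (lift_isolated a S') x} = (if a then {v} else {}) \<union> ?P"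
    using colour_lift_isolated[OF S'] v_verts by (auto split: if_splits)
  have coloured': "{X \<in> verts G'. colour G' S' X} = vc ` ?P"
  proof (intro equalityI subsetI)
    fix X assume X: "X \<in> {X \<in> verts G'. colour G' S' X}"
    then have "X \<in> verts G'" by simp
    then obtain x where "x \<in> verts G" "x \<noteq> v" "X = vc x" by (rule verts_contract_obtain)
    then show "X \<in> vc ` ?P" using X by blast
  qed auto
  have "{v} \<notin> comp_of G ?s ` ?P"
    using comp_of_self by fastforce
  moreover have "finite (comp_of G ?s ` ?P)" using wf_graph_finite[OF wf] by simp
  ultimately have "jdeg G (lift_isolated a S') = int (card (comp_of G ?s ` ?P)) + (if a then 1 else 0)"
    using jdeg_eq_card_coloured[OF lift_isolated_in_states[OF S']] comp_v coloured
    by (simp add: fst_lift_isolated)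
  also have "card (comp_of G ?s ` ?P) = card (comp_of G' ?s ` vc ` ?P)"
    using image conn_rel_contract_iff[OF s'] by (subst card_comps_vc) auto
  also have "int (card (comp_of G' ?s ` vc ` ?P)) = jdeg G' S'"
    using jdeg_eq_card_coloured[OF S'] coloured' by simp
  finally show ?thesis .
qed

lemma ideg_lift_isolated: "ideg (lift_isolated a S') = ideg S'"
  by (simp add: ideg_def fst_lift_isolated)

lemma ideg_lift_joined:
  assumes S': "S' \<in> states G'"
  shows "ideg (lift_joined S') = ideg S' + 1"
proof -
  have "finite (fst S')" "e \<notin> fst S'"
    using states_contract_edges[OF S'] wf_graph_finite[OF wf] finite_subset by auto
  then show ?thesis by (simp add: ideg_def fst_lift_joined)
qed

lemma touch_contract_iff:
  assumes s': "s' \<subseteq> edges G - {e}" and e': "e' \<in> edges G" "e' \<noteq> e" and x: "x \<in> verts G" "x \<noteq> v"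
  shows "touch G s' e' x \<longleftrightarrow> touch G' s' e' (vc x)"
proof -
  have "u \<in> verts G \<and> u \<noteq> v" if "u \<in> ends G e'" for u
    using wf_graph_ends_subset[OF wf e'(1)] v_notin_ends[OF e'] that by auto
  then show ?thesis unfolding touch_def using conn_rel_contract_iff[OF s' x] by auto
qed

lemma touch_insert_e_iff:
  assumes s': "s' \<subseteq> edges G - {e}" and e': "e' \<in> edges G" and x: "x \<in> verts G"
  shows "touch G (insert e s') e' x \<longleftrightarrow> touch G' s' e' (vc x)"
  unfolding touch_def using conn_rel_insert_e_iff[OF s' x] wf_graph_ends_subset[OF wf e'] by auto

lemma not_touch_v:
  assumes s': "s' \<subseteq> edges G - {e}" and e': "e' \<in> edges G" "e' \<noteq> e"
  shows "\<not> touch G s' e' v"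
  unfolding touch_def using conn_rel_from_v[OF s'] v_notin_ends[OF e'] by blast

lemma add_edge_lift_isolated:
  assumes S': "S' \<in> states G'" and e': "e' \<in> edges G" "e' \<noteq> e"
  shows "add_edge G (lift_isolated a S') e' = map_option (lift_isolated a) (add_edge G' S' e')"
proof -
  let ?s = "fst S'" and ?L = "lift_isolated a S'"
  have s': "?s \<subseteq> edges G - {e}" using states_contract_edges[OF S'] .
  have e'': "e' \<in> edges G'" using e' by simp
  have ends: "u \<in> verts G \<and> u \<noteq> v" if "u \<in> ends G e'" for u
    using wf_graph_ends_subset[OF wf e'(1)] v_notin_ends[OF e'] that by auto
  have colour_ends: "colour G ?L u = colour G' S' (vc u)" if "u \<in> ends G e'" for u
    using colour_lift_isolated[OF S'] ends[OF that] by simp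
  have "(\<exists>p\<in>ends G e'. \<exists>q\<in>ends G e'. (p, q) \<notin> conn_rel G ?s) \<longleftrightarrow>
      (\<exists>p\<in>ends G' e'. \<exists>q\<in>ends G' e'. (p, q) \<notin> conn_rel G' ?s)"
    using conn_rel_contract_iff[OF s'] ends by auto
  moreover have "(\<forall>u\<in>ends G e'. colour G ?L u) \<longleftrightarrow> (\<forall>U\<in>ends G' e'. colour G' S' U)"
    using colour_ends by auto
  ultimately have None_iff: "add_edge G ?L e' = None \<longleftrightarrow> add_edge G' S' e' = None"
    using add_edge_eq_None_iff[OF wf e'(1), of ?L] add_edge_eq_None_iff[OF wf_contract e'', of S']
    by (simp add: fst_lift_isolated)
  show ?thesis
  proof (cases "add_edge G' S' e'")
    case None
    then show ?thesis using None_iff by simp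
  next
    case (Some Y)
    note Y_props = add_edge_SomeD[OF wf_contract e'' S' Some]
    have "add_edge G ?L e' = Some (lift_isolated a Y)"
      unfolding add_edge_eq_Some_iff[OF wf e'(1) lift_isolated_in_states[OF S']
          lift_isolated_in_states[OF conjunct1[OF Y_props]]] fst_lift_isolated
    proof (intro conjI ballI)
      show "fst Y = insert e' ?s" using Y_props by simp
      show "\<not> ((\<exists>p\<in>ends G e'. \<exists>q\<in>ends G e'. (p, q) \<notin> conn_rel G ?s) \<and> (\<forall>u\<in>ends G e'. colour G ?L u))"
        using None_iff Some add_edge_eq_None_iff[OF wf e'(1), of ?L] by (simp add: fst_lift_isolated)
    next
      fix x assume x: "x \<in> verts G"
      have "(\<exists>u\<in>ends G e'. colour G ?L u) \<longleftrightarrow> (\<exists>U\<in>ends G' e'. colour G' S' U)"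
        using colour_ends by auto
      then show "colour G (lift_isolated a Y) x =
          (if touch G ?s e' x then \<exists>u\<in>ends G e'. colour G ?L u else colour G ?L x)"
        using colour_lift_isolated[OF conjunct1[OF Y_props] x, of a] colour_lift_isolated[OF S' x, of a]
          Y_props not_touch_v[OF s' e'] touch_contract_iff[OF s' e' x] x
        by (cases "x = v") auto
    qed
    then show ?thesis using Some by simp
  qed
qed

lemma add_edge_lift_joined:
  assumes S': "S' \<in> states G'" and e': "e' \<in> edges G" "e' \<noteq> e"
  shows "add_edge G (lift_joined S') e' = map_option lift_joined (add_edge G' S' e')"
proof -
  let ?s = "fst S'" and ?L = "lift_joined S'"
  have s': "?s \<subseteq> edges G - {e}" using states_contract_edges[OF S'] .
  have e'': "e' \<in> edges G'" using e' by simp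
  have ends: "u \<in> verts G" if "u \<in> ends G e'" for u
    using wf_graph_ends_subset[OF wf e'(1)] that by auto
  have colour_ends: "colour G ?L u = colour G' S' (vc u)" if "u \<in> ends G e'" for u
    using colour_lift_joined[OF S' ends[OF that]] .
  have "(\<exists>p\<in>ends G e'. \<exists>q\<in>ends G e'. (p, q) \<notin> conn_rel G (insert e ?s)) \<longleftrightarrow>
      (\<exists>p\<in>ends G' e'. \<exists>q\<in>ends G' e'. (p, q) \<notin> conn_rel G' ?s)"
    using conn_rel_insert_e_iff[OF s'] ends by auto
  moreover have "(\<forall>u\<in>ends G e'. colour G ?L u) \<longleftrightarrow> (\<forall>U\<in>ends G' e'. colour G' S' U)"
    using colour_ends by auto
  ultimately have None_iff: "add_edge G ?L e' = None \<longleftrightarrow> add_edge G' S' e' = None"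
    using add_edge_eq_None_iff[OF wf e'(1), of ?L] add_edge_eq_None_iff[OF wf_contract e'', of S']
    by (simp add: fst_lift_joined)
  show ?thesis
  proof (cases "add_edge G' S' e'")
    case None
    then show ?thesis using None_iff by simp
  next
    case (Some Y)
    note Y_props = add_edge_SomeD[OF wf_contract e'' S' Some]
    have "add_edge G ?L e' = Some (lift_joined Y)"
      unfolding add_edge_eq_Some_iff[OF wf e'(1) lift_joined_in_states[OF S']
          lift_joined_in_states[OF conjunct1[OF Y_props]]] fst_lift_joined
    proof (intro conjI ballI)
      show "insert e (fst Y) = insert e' (insert e ?s)" using Y_props by auto
      show "\<not> ((\<exists>p\<in>ends G e'. \<exists>q\<in>ends G e'. (p, q) \<notin> conn_rel G (insert e ?s)) \<and>
          (\<forall>u\<in>ends G e'. colour G ?L u))"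
        using None_iff Some add_edge_eq_None_iff[OF wf e'(1), of ?L] by (simp add: fst_lift_joined)
    next
      fix x assume x: "x \<in> verts G"
      have "(\<exists>u\<in>ends G e'. colour G ?L u) \<longleftrightarrow> (\<exists>U\<in>ends G' e'. colour G' S' U)"
        using colour_ends by auto
      then show "colour G (lift_joined Y) x =
          (if touch G (insert e ?s) e' x then \<exists>u\<in>ends G e'. colour G ?L u else colour G ?L x)"
        using colour_lift_joined[OF conjunct1[OF Y_props] x] colour_lift_joined[OF S' x] Y_props
          touch_insert_e_iff[OF s' e'(1) x] x
        by auto
    qed
    then show ?thesis using Some by simp
  qed
qed

text \<open>Adding \<open>e\<close> to a state in which \<open>v\<close> is isolated with colour \<open>a\<close> multiplies \<open>a\<close> into the
  colour of the component of \<open>w\<close>; seen in \<open>G/e\<close> this only recolours the component of \<open>vc v\<close>.\<close>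

definition merge_v :: "bool \<Rightarrow> ('v set, 'e) estate \<Rightarrow> ('v set, 'e) estate option" where
  "merge_v a S' = (if a \<and> colour G' S' (vc v) then None
     else Some (recolour G' (vc v) (a \<or> colour G' S' (vc v)) S'))"

lemma merge_v_in_states:
  assumes "S' \<in> states G'" "merge_v a S' = Some Y"
  shows "Y \<in> states G'"
  using assms(2) recolour_in_states[OF assms(1) vc_v_verts] unfolding merge_v_def by (auto split: if_splits)

lemma merge_v_False: "merge_v False S' = Some S'"
  unfolding merge_v_def using recolour_colour[of G' S' "vc v"] by simp

lemma add_e_lift_isolated:
  assumes S': "S' \<in> states G'"
  shows "add_edge G (lift_isolated a S') e = map_option lift_joined (merge_v a S')"
proof -
  let ?s = "fst S'" and ?L = "lift_isolated a S'" and ?b = "a \<or> colour G' S' (vc v)"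
  have s': "?s \<subseteq> edges G - {e}" using states_contract_edges[OF S'] .
  have colour_v: "colour G ?L v = a" using colour_lift_isolated_v[OF S'] .
  have colour_w: "colour G ?L w = colour G' S' (vc v)"
    using colour_lift_isolated[OF S' w_verts] v_ne_w vc_v_eq_vc_w by simp
  have "(v, w) \<notin> conn_rel G ?s" using conn_rel_from_v[OF s'] v_ne_w by blast
  then have None_iff: "add_edge G ?L e = None \<longleftrightarrow> a \<and> colour G' S' (vc v)"
    using add_edge_eq_None_iff[OF wf e_edge, of ?L] colour_v colour_w conn_rel_refl v_verts w_verts
    unfolding ends_e by (auto simp: fst_lift_isolated)
  show ?thesis
  proof (cases "a \<and> colour G' S' (vc v)")
    case True
    then show ?thesis using None_iff by (simp add: merge_v_def)
  next
    case False
    let ?Y = "recolour G' (vc v) ?b S'"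
    have Y: "?Y \<in> states G'" using recolour_in_states[OF S' vc_v_verts] .
    have "add_edge G ?L e = Some (lift_joined ?Y)"
      unfolding add_edge_eq_Some_iff[OF wf e_edge lift_isolated_in_states[OF S'] lift_joined_in_states[OF Y]]
        fst_lift_isolated fst_lift_joined
    proof (intro conjI ballI)
      show "insert e (fst ?Y) = insert e ?s" by simp
      show "\<not> ((\<exists>p\<in>ends G e. \<exists>q\<in>ends G e. (p, q) \<notin> conn_rel G ?s) \<and> (\<forall>x\<in>ends G e. colour G ?L x))"
        using None_iff False add_edge_eq_None_iff[OF wf e_edge, of ?L] by (simp add: fst_lift_isolated)
    next
      fix x assume x: "x \<in> verts G"
      have lhs: "colour G (lift_joined ?Y) x =
          (if (vc x, vc v) \<in> conn_rel G' ?s then ?b else colour G' S' (vc x))"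
        using colour_lift_joined[OF Y x] colour_recolour[OF _ vc_v_verts] x by simp
      have merged: "(\<exists>u\<in>ends G e. colour G ?L u) = ?b" using colour_v colour_w ends_e by auto
      show "colour G (lift_joined ?Y) x = (if touch G ?s e x then \<exists>u\<in>ends G e. colour G ?L u else colour G ?L x)"
      proof (cases "x = v")
        case True
        have "touch G ?s e v" using touch_end[OF _ v_verts] ends_e by simp
        then show ?thesis using True lhs merged conn_rel_refl[OF vc_v_verts] by simp
      next
        case False
        have "touch G ?s e x \<longleftrightarrow> (x, w) \<in> conn_rel G ?s"
          unfolding touch_def ends_e using conn_rel_to_v[OF s'] False by auto
        also have "\<dots> \<longleftrightarrow> (vc x, vc v) \<in> conn_rel G' ?s"
          using conn_rel_contract_iff[OF s' x False w_verts] v_ne_w vc_v_eq_vc_w by simp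
        finally show ?thesis using lhs merged colour_lift_isolated[OF S' x] False by simp
      qed
    qed
    then show ?thesis using False by (simp add: merge_v_def)
  qed
qed

text \<open>Order the edges of \<open>G\<close> so that \<open>e\<close> comes first and the others follow the ordering
  \<open>r'\<close> of \<open>G/e\<close>; then no sign changes on the edges of \<open>G/e\<close> except for one extra factor
  \<open>-1\<close> in states containing \<open>e\<close>.\<close>

definition e_first :: "('e \<Rightarrow> nat) \<Rightarrow> 'e \<Rightarrow> nat" where
  "e_first r' f = (if f = e then 0 else Suc (r' f))"

lemma inj_on_e_first: "inj_on r' (edges G') \<Longrightarrow> inj_on (e_first r') (edges G)"
  unfolding inj_on_def e_first_def by auto

lemma nbefore_e_first: "s' \<subseteq> edges G - {e} \<Longrightarrow> e' \<noteq> e \<Longrightarrow> nbefore (e_first r') s' e' = nbefore r' s' e'"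
  unfolding nbefore_def e_first_def by (rule arg_cong[where f = card]) auto

lemma nbefore_e_first_e: "nbefore (e_first r') s' e = 0"
  unfolding nbefore_def e_first_def by simp

lemma nbefore_e_first_insert_e:
  assumes s': "s' \<subseteq> edges G - {e}" and e': "e' \<noteq> e"
  shows "nbefore (e_first r') (insert e s') e' = Suc (nbefore r' s' e')"
proof -
  have "finite s'" using s' wf_graph_finite[OF wf] finite_subset by auto
  moreover have "{f \<in> insert e s'. e_first r' f < e_first r' e'} = insert e {f \<in> s'. r' f < r' e'}"
    using s' e' unfolding e_first_def by auto
  moreover have "e \<notin> {f \<in> s'. r' f < r' e'}" using s' by auto
  ultimately show ?thesis unfolding nbefore_def by simp
qed

lemma diff_contrib_lift_isolated:
  assumes S': "S' \<in> states G'"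
  shows "diff_contrib G (e_first r') \<phi> T (lift_isolated a S') =
    (if map_option lift_joined (merge_v a S') = Some T then \<phi> (lift_isolated a S') else 0) +
    (\<Sum>e'\<in>edges G' - fst S'. if map_option (lift_isolated a) (add_edge G' S' e') = Some T
        then (-1) ^ nbefore r' (fst S') e' * \<phi> (lift_isolated a S') else 0)"
proof -
  have s': "fst S' \<subseteq> edges G - {e}" using states_contract_edges[OF S'] .
  let ?L = "lift_isolated a S'"
  have E: "edges G - fst ?L = insert e (edges G' - fst S')"
    using s' e_edge by (auto simp: fst_lift_isolated)
  have fin: "finite (edges G' - fst S')" and notin: "e \<notin> edges G' - fst S'"
    using wf_graph_finite[OF wf] by auto
  show ?thesis
    unfolding diff_contrib_def E sum.insert[OF fin notin]
  proof (intro arg_cong2[where f = "(+)"] sum.cong refl)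
    show "(if add_edge G ?L e = Some T then (-1) ^ nbefore (e_first r') (fst ?L) e * \<phi> ?L else 0) =
        (if map_option lift_joined (merge_v a S') = Some T then \<phi> ?L else 0)"
      by (simp add: add_e_lift_isolated[OF S'] nbefore_e_first_e del: map_option_eq_Some)
  next
    fix e' assume "e' \<in> edges G' - fst S'"
    then have "add_edge G ?L e' = map_option (lift_isolated a) (add_edge G' S' e')"
      "nbefore (e_first r') (fst ?L) e' = nbefore r' (fst S') e'"
      using add_edge_lift_isolated[OF S'] nbefore_e_first[OF s'] by (auto simp: fst_lift_isolated)
    then show "(if add_edge G ?L e' = Some T then (-1) ^ nbefore (e_first r') (fst ?L) e' * \<phi> ?L else 0) =
        (if map_option (lift_isolated a) (add_edge G' S' e') = Some T
         then (-1) ^ nbefore r' (fst S') e' * \<phi> ?L else 0)"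
      by (simp del: map_option_eq_Some)
  qed
qed

lemma diff_contrib_lift_joined:
  assumes S': "S' \<in> states G'"
  shows "diff_contrib G (e_first r') \<phi> T (lift_joined S') =
    - (\<Sum>e'\<in>edges G' - fst S'. if map_option lift_joined (add_edge G' S' e') = Some T
        then (-1) ^ nbefore r' (fst S') e' * \<phi> (lift_joined S') else 0)"
proof -
  have s': "fst S' \<subseteq> edges G - {e}" using states_contract_edges[OF S'] .
  let ?L = "lift_joined S'"
  have E: "edges G - fst ?L = edges G' - fst S'"
    by (auto simp: fst_lift_joined)
  show ?thesis
    unfolding diff_contrib_def E sum_negf[symmetric]
  proof (intro sum.cong refl)
    fix e' assume "e' \<in> edges G' - fst S'"
    then have "add_edge G ?L e' = map_option lift_joined (add_edge G' S' e')"
      "nbefore (e_first r') (fst ?L) e' = Suc (nbefore r' (fst S') e')"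
      using add_edge_lift_joined[OF S'] nbefore_e_first_insert_e[OF s'] by (auto simp: fst_lift_joined)
    then show "(if add_edge G ?L e' = Some T then (-1) ^ nbefore (e_first r') (fst ?L) e' * \<phi> ?L else 0) =
        - (if map_option lift_joined (add_edge G' S' e') = Some T
           then (-1) ^ nbefore r' (fst S') e' * \<phi> ?L else 0)"
      by (simp del: map_option_eq_Some)
  qed
qed

lemma map_option_lift_isolated_eq_iff:
  assumes "T' \<in> states G'" and "\<And>X. Y = Some X \<Longrightarrow> X \<in> states G'"
  shows "map_option (lift_isolated a) Y = Some (lift_isolated b T') \<longleftrightarrow> a = b \<and> Y = Some T'"
  using assms lift_isolated_eq_iff by (cases Y) auto

lemma map_option_lift_joined_eq_iff:
  assumes "T' \<in> states G'" and "\<And>X. Y = Some X \<Longrightarrow> X \<in> states G'"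
  shows "map_option lift_joined Y = Some (lift_joined T') \<longleftrightarrow> Y = Some T'"
  using assms lift_joined_eq_iff by (cases Y) auto

lemma map_option_lift_joined_ne_lift_isolated:
  assumes "T' \<in> states G'"
  shows "map_option lift_joined Y \<noteq> Some (lift_isolated b T')"
  using lift_isolated_ne_lift_joined[OF assms] by (cases Y) (simp_all del: map_option_eq_Some, metis)

lemma map_option_lift_isolated_ne_lift_joined:
  assumes "\<And>X. Y = Some X \<Longrightarrow> X \<in> states G'"
  shows "map_option (lift_isolated a) Y \<noteq> Some (lift_joined T')"
  using assms lift_isolated_ne_lift_joined by (cases Y) auto

lemma diff_at_lift_isolated:
  assumes T': "T' \<in> states G'"
  shows "diff G (e_first r') \<phi> (lift_isolated b T') = diff G' r' (\<lambda>S'. \<phi> (lift_isolated b S')) T'"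
proof -
  have Some_in_states: "X \<in> states G'" if "S' \<in> states G'" "e' \<in> edges G' - fst S'"
    "add_edge G' S' e' = Some X" for S' e' X
    using add_edge_SomeD[OF wf_contract _ that(1)] that(2,3) by blast
  have isolated: "diff_contrib G (e_first r') \<phi> (lift_isolated b T') (lift_isolated a S') =
      (\<Sum>e'\<in>edges G' - fst S'. if a = b \<and> add_edge G' S' e' = Some T'
        then (-1) ^ nbefore r' (fst S') e' * \<phi> (lift_isolated a S') else 0)"
    if S': "S' \<in> states G'" for a S'
  proof -
    have "map_option (lift_isolated a) (add_edge G' S' e') = Some (lift_isolated b T') \<longleftrightarrow>
        a = b \<and> add_edge G' S' e' = Some T'" if "e' \<in> edges G' - fst S'" for e'
      using map_option_lift_isolated_eq_iff[OF T' Some_in_states[OF S' that]] .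
    then show ?thesis
      unfolding diff_contrib_lift_isolated[OF S']
      using map_option_lift_joined_ne_lift_isolated[OF T'] by (simp del: map_option_eq_Some)
  qed
  have "diff_contrib G (e_first r') \<phi> (lift_isolated b T') (lift_joined S') = 0"
    if S': "S' \<in> states G'" for S'
    unfolding diff_contrib_lift_joined[OF S']
    using map_option_lift_joined_ne_lift_isolated[OF T'] by (simp del: map_option_eq_Some)
  moreover have "diff_contrib G (e_first r') \<phi> (lift_isolated b T') (lift_isolated (\<not> b) S') = 0"
    if S': "S' \<in> states G'" for S'
    using isolated[OF S', of "\<not> b"] by simp
  moreover have "diff_contrib G (e_first r') \<phi> (lift_isolated b T') (lift_isolated b S') =
      diff_contrib G' r' (\<lambda>S'. \<phi> (lift_isolated b S')) T' S'"
    if S': "S' \<in> states G'" for S'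
    using isolated[OF S', of b] by (simp add: diff_contrib_def)
  ultimately show ?thesis
    unfolding diff_eq_sum_contrib[of G] diff_eq_sum_contrib[of G'] sum_states_decompose
    by (cases b) simp_all
qed

lemma merge_v_True_eq_Some_iff:
  "merge_v True S' = Some T' \<longleftrightarrow> colour G' T' (vc v) \<and> S' = recolour G' (vc v) False T'"
proof
  assume "merge_v True S' = Some T'"
  then have "\<not> colour G' S' (vc v)" and T': "T' = recolour G' (vc v) True S'"
    unfolding merge_v_def by (auto split: if_splits)
  then show "colour G' T' (vc v) \<and> S' = recolour G' (vc v) False T'"
    using colour_recolour_self[OF vc_v_verts] recolour_colour[of G' S' "vc v" False] by simp
next
  assume T': "colour G' T' (vc v) \<and> S' = recolour G' (vc v) False T'"
  then have "\<not> colour G' S' (vc v)"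
    using colour_recolour_self[OF vc_v_verts] by simp
  then show "merge_v True S' = Some T'"
    using T' recolour_colour[of G' T' "vc v" True] by (simp add: merge_v_def)
qed

lemma diff_at_lift_joined:
  assumes T': "T' \<in> states G'"
  shows "diff G (e_first r') \<phi> (lift_joined T') = \<phi> (lift_isolated False T')
     + (if colour G' T' (vc v) then \<phi> (lift_isolated True (recolour G' (vc v) False T')) else 0)
     - diff G' r' (\<lambda>S'. \<phi> (lift_joined S')) T'"
proof -
  have Some_in_states: "X \<in> states G'" if "S' \<in> states G'" "e' \<in> edges G' - fst S'"
    "add_edge G' S' e' = Some X" for S' e' X
    using add_edge_SomeD[OF wf_contract _ that(1)] that(2,3) by blast
  have fin: "finite (states G')" using finite_states[OF wf_contract] .
  have isolated: "diff_contrib G (e_first r') \<phi> (lift_joined T') (lift_isolated a S') =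
      (if merge_v a S' = Some T' then \<phi> (lift_isolated a S') else 0)"
    if S': "S' \<in> states G'" for a S'
  proof -
    have "map_option lift_joined (merge_v a S') = Some (lift_joined T') \<longleftrightarrow> merge_v a S' = Some T'"
      using map_option_lift_joined_eq_iff[OF T' merge_v_in_states[OF S']] .
    moreover have "map_option (lift_isolated a) (add_edge G' S' e') \<noteq> Some (lift_joined T')"
      if "e' \<in> edges G' - fst S'" for e'
      using map_option_lift_isolated_ne_lift_joined[OF Some_in_states[OF S' that]] .
    ultimately show ?thesis
      unfolding diff_contrib_lift_isolated[OF S'] by (simp del: map_option_eq_Some)
  qed
  have joined: "diff_contrib G (e_first r') \<phi> (lift_joined T') (lift_joined S') =
      - diff_contrib G' r' (\<lambda>S'. \<phi> (lift_joined S')) T' S'"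
    if S': "S' \<in> states G'" for S'
  proof -
    have "map_option lift_joined (add_edge G' S' e') = Some (lift_joined T') \<longleftrightarrow> add_edge G' S' e' = Some T'"
      if "e' \<in> edges G' - fst S'" for e'
      using map_option_lift_joined_eq_iff[OF T' Some_in_states[OF S' that]] .
    then show ?thesis
      unfolding diff_contrib_lift_joined[OF S'] by (simp add: diff_contrib_def del: map_option_eq_Some)
  qed
  have "(\<Sum>S'\<in>states G'. if merge_v True S' = Some T' then \<phi> (lift_isolated True S') else 0) =
      (if colour G' T' (vc v) then \<phi> (lift_isolated True (recolour G' (vc v) False T')) else 0)"
    using fin recolour_in_states[OF T' vc_v_verts] by (simp add: merge_v_True_eq_Some_iff sum.delta)
  moreover have "(\<Sum>S'\<in>states G'. if merge_v False S' = Some T' then \<phi> (lift_isolated False S') else 0) =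
      \<phi> (lift_isolated False T')"
    using fin T' by (simp add: merge_v_False sum.delta)
  ultimately show ?thesis
    unfolding diff_eq_sum_contrib[of G] diff_eq_sum_contrib[of G'] sum_states_decompose
    by (simp add: isolated joined sum_negf)
qed

text \<open>\<open>restrict_x\<close> keeps the coefficients of the states in which \<open>v\<close> is isolated and coloured
  \<open>x\<close>; it lowers the \<open>j\<close>-degree by one. \<open>lift_cochain\<close> is a chain map splitting it.\<close>

definition restrict_x :: "('v, 'e) chain \<Rightarrow> ('v set, 'e) chain" where
  "restrict_x \<phi> S' = (if S' \<in> states G' then \<phi> (lift_isolated True S') else 0)"

definition lift_cochain :: "('v set, 'e) chain \<Rightarrow> ('v, 'e) chain" where
  "lift_cochain \<psi> S = (if S \<in> states G \<and> e \<notin> fst S then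
     (if colour G S v then \<psi> (contract_state S) else - pullback_uncolour G' (vc v) \<psi> (contract_state S))
     else 0)"

lemma e_notin_lift_isolated: "S' \<in> states G' \<Longrightarrow> e \<notin> fst (lift_isolated a S')"
  using states_contract_edges by (fastforce simp: fst_lift_isolated)

lemma lift_cochain_lift_isolated_True:
  "T' \<in> states G' \<Longrightarrow> lift_cochain \<psi> (lift_isolated True T') = \<psi> T'"
  unfolding lift_cochain_def
  using lift_isolated_in_states e_notin_lift_isolated colour_lift_isolated_v contract_state_lift_isolated
  by simp

lemma lift_cochain_lift_isolated_False:
  "T' \<in> states G' \<Longrightarrow> lift_cochain \<psi> (lift_isolated False T') = - pullback_uncolour G' (vc v) \<psi> T'"
  unfolding lift_cochain_def
  using lift_isolated_in_states e_notin_lift_isolated colour_lift_isolated_v contract_state_lift_isolated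
  by simp

lemma lift_cochain_lift_joined: "lift_cochain \<psi> (lift_joined T') = 0"
  unfolding lift_cochain_def by (simp add: fst_lift_joined)

lemma lift_cochain_outside_states: "S \<notin> states G \<Longrightarrow> lift_cochain \<psi> S = 0"
  unfolding lift_cochain_def by simp

lemma restrict_x_diff: "restrict_x (diff G (e_first r') \<phi>) = diff G' r' (restrict_x \<phi>)"
proof
  fix S'
  show "restrict_x (diff G (e_first r') \<phi>) S' = diff G' r' (restrict_x \<phi>) S'"
  proof (cases "S' \<in> states G'")
    case True
    have "diff G' r' (restrict_x \<phi>) = diff G' r' (\<lambda>S'. \<phi> (lift_isolated True S'))"
      by (rule diff_cong) (simp add: restrict_x_def)
    then show ?thesis using diff_at_lift_isolated[OF True] True by (simp add: restrict_x_def)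
  next
    case False
    then show ?thesis using diff_outside_states[OF wf_contract False] by (simp add: restrict_x_def)
  qed
qed

lemma diff_lift_cochain: "diff G (e_first r') (lift_cochain \<psi>) = lift_cochain (diff G' r' \<psi>)"
proof
  fix T
  show "diff G (e_first r') (lift_cochain \<psi>) T = lift_cochain (diff G' r' \<psi>) T"
  proof (cases "T \<in> states G")
    case False
    then show ?thesis using diff_outside_states[OF wf False] lift_cochain_outside_states by simp
  next
    case True
    then show ?thesis
    proof (cases rule: states_cases)
      case (coloured T')
      have "diff G' r' (\<lambda>S'. lift_cochain \<psi> (lift_isolated True S')) = diff G' r' \<psi>"
        by (rule diff_cong) (simp add: lift_cochain_lift_isolated_True)
      then show ?thesis
        using diff_at_lift_isolated[OF coloured(1)] lift_cochain_lift_isolated_True[OF coloured(1)]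
          coloured(2) by simp
    next
      case (uncoloured T')
      have "diff G (e_first r') (lift_cochain \<psi>) T =
          diff G' r' (\<lambda>S'. lift_cochain \<psi> (lift_isolated False S')) T'"
        using diff_at_lift_isolated[OF uncoloured(1)] uncoloured(2) by simp
      also have "\<dots> = diff G' r' (\<lambda>S'. - pullback_uncolour G' (vc v) \<psi> S') T'"
        by (rule fun_cong[OF diff_cong]) (simp add: lift_cochain_lift_isolated_False)
      also have "\<dots> = - pullback_uncolour G' (vc v) (diff G' r' \<psi>) T'"
        using diff_neg[of G' r' "pullback_uncolour G' (vc v) \<psi>"]
          diff_pullback_uncolour[OF wf_contract vc_v_verts] by simp
      also have "\<dots> = lift_cochain (diff G' r' \<psi>) T"
        using lift_cochain_lift_isolated_False[OF uncoloured(1)] uncoloured(2) by simp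
      finally show ?thesis .
    next
      case (joined T')
      have "diff G' r' (\<lambda>S'. lift_cochain \<psi> (lift_joined S')) = (\<lambda>_. 0)"
        by (rule diff_eq_0_if_vanishing) (simp add: lift_cochain_lift_joined)
      moreover have "lift_cochain \<psi> (lift_isolated True (recolour G' (vc v) False T')) =
          \<psi> (recolour G' (vc v) False T')"
        using lift_cochain_lift_isolated_True recolour_in_states[OF joined(1) vc_v_verts] by simp
      ultimately show ?thesis
        using diff_at_lift_joined[OF joined(1)] lift_cochain_lift_isolated_False[OF joined(1)]
          lift_cochain_lift_joined joined(2)
        by (simp add: pullback_uncolour_def)
    qed
  qed
qed

lemma restrict_x_lift_cochain: "\<psi> \<in> chains G' i j \<Longrightarrow> restrict_x (lift_cochain \<psi>) = \<psi>"
  unfolding restrict_x_def using lift_cochain_lift_isolated_True chains_outside_states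
  by (auto simp: fun_eq_iff)

lemma restrict_x_chains:
  assumes "\<phi> \<in> chains G i j"
  shows "restrict_x \<phi> \<in> chains G' i (j - 1)"
  unfolding chains_def
proof (intro CollectI allI impI)
  fix S' assume "restrict_x \<phi> S' \<noteq> 0"
  then have S': "S' \<in> states G'" and "\<phi> (lift_isolated True S') \<noteq> 0"
    by (auto simp: restrict_x_def split: if_splits)
  then have "ideg (lift_isolated True S') = i" "jdeg G (lift_isolated True S') = j"
    using chainsD[OF assms] by auto
  then show "S' \<in> states G' \<and> ideg S' = i \<and> jdeg G' S' = j - 1"
    using S' ideg_lift_isolated jdeg_lift_isolated[OF S'] by simp
qed

lemma lift_cochain_chains:
  assumes \<psi>: "\<psi> \<in> chains G' i (j - 1)"
  shows "lift_cochain \<psi> \<in> chains G i j"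
  unfolding chains_def
proof (intro CollectI allI impI)
  fix S assume nonzero: "lift_cochain \<psi> S \<noteq> 0"
  then have S: "S \<in> states G" and eS: "e \<notin> fst S"
    by (auto simp: lift_cochain_def split: if_splits)
  let ?D = "contract_state S"
  have D: "?D \<in> states G'" using contract_state_in_states[OF S] .
  have S_eq: "lift_isolated (colour G S v) ?D = S"
    using lift_isolated_contract_state[OF S eS] .
  show "S \<in> states G \<and> ideg S = i \<and> jdeg G S = j"
  proof (cases "colour G S v")
    case True
    then have "\<psi> ?D \<noteq> 0" using nonzero S eS by (simp add: lift_cochain_def)
    then have "ideg ?D = i" "jdeg G' ?D = j - 1" using chainsD[OF \<psi>] by auto
    moreover have "lift_isolated True ?D = S" using S_eq True by simp
    then have "ideg S = ideg ?D" "jdeg G S = jdeg G' ?D + 1"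
      using ideg_lift_isolated[of True ?D] jdeg_lift_isolated[OF D, of True] by simp_all
    ultimately show ?thesis using S by simp
  next
    case False
    let ?U = "recolour G' (vc v) False ?D"
    have coloured: "colour G' ?D (vc v)" and "\<psi> ?U \<noteq> 0"
      using nonzero S eS False by (auto simp: lift_cochain_def pullback_uncolour_def split: if_splits)
    then have "ideg ?U = i" "jdeg G' ?U = j - 1" using chainsD[OF \<psi>] by auto
    moreover have "jdeg G' ?D = jdeg G' ?U + 1"
      using jdeg_uncolour[OF _ vc_v_verts coloured] wf_graph_finite[OF wf_contract] by simp
    moreover have "ideg ?U = ideg ?D" by (simp add: ideg_def)
    moreover have "lift_isolated False ?D = S" using S_eq False by simp
    then have "ideg S = ideg ?D" "jdeg G S = jdeg G' ?D"
      using ideg_lift_isolated[of False ?D] jdeg_lift_isolated[OF D, of False] by simp_all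
    ultimately show ?thesis using S by simp
  qed
qed

text \<open>A cocycle vanishing on the states in which \<open>v\<close> is coloured \<open>x\<close> is a coboundary: moving
  each coefficient from a state containing \<open>e\<close> to the state obtained by deleting \<open>e\<close> and
  colouring \<open>v\<close> with \<open>1\<close> gives a primitive.\<close>

definition join_shift :: "('v, 'e) chain \<Rightarrow> ('v, 'e) chain" where
  "join_shift \<theta> S = (if S \<in> states G \<and> e \<notin> fst S \<and> \<not> colour G S v
     then \<theta> (lift_joined (contract_state S)) else 0)"

lemma join_shift_lift_isolated_True: "T' \<in> states G' \<Longrightarrow> join_shift \<theta> (lift_isolated True T') = 0"
  using colour_lift_isolated_v by (simp add: join_shift_def)

lemma join_shift_lift_isolated_False:
  "T' \<in> states G' \<Longrightarrow> join_shift \<theta> (lift_isolated False T') = \<theta> (lift_joined T')"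
  using lift_isolated_in_states e_notin_lift_isolated colour_lift_isolated_v contract_state_lift_isolated
  by (simp add: join_shift_def)

lemma join_shift_lift_joined: "join_shift \<theta> (lift_joined T') = 0"
  by (simp add: join_shift_def fst_lift_joined)

lemma join_shift_chains:
  assumes \<theta>: "\<theta> \<in> chains G i j"
  shows "join_shift \<theta> \<in> chains G (i - 1) j"
  unfolding chains_def
proof (intro CollectI allI impI)
  fix S assume "join_shift \<theta> S \<noteq> 0"
  then have S: "S \<in> states G" and eS: "e \<notin> fst S" and uncoloured: "\<not> colour G S v"
    and nonzero: "\<theta> (lift_joined (contract_state S)) \<noteq> 0"
    by (auto simp: join_shift_def split: if_splits)
  let ?D = "contract_state S"
  have D: "?D \<in> states G'" using contract_state_in_states[OF S] .
  have "lift_isolated False ?D = S"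
    using lift_isolated_contract_state[OF S eS] uncoloured by simp
  moreover have "ideg (lift_joined ?D) = i" "jdeg G (lift_joined ?D) = j"
    using chainsD[OF \<theta> nonzero] by auto
  ultimately show "S \<in> states G \<and> ideg S = i - 1 \<and> jdeg G S = j"
    using S ideg_lift_joined[OF D] jdeg_lift_joined[OF D] ideg_lift_isolated[of False ?D]
      jdeg_lift_isolated[OF D, of False]
    by auto
qed

lemma cocycle_eq_diff_join_shift:
  assumes \<theta>: "\<theta> \<in> chains G i j" and closed: "diff G (e_first r') \<theta> = (\<lambda>_. 0)"
    and vanishing: "\<And>T'. T' \<in> states G' \<Longrightarrow> \<theta> (lift_isolated True T') = 0"
  shows "\<theta> = diff G (e_first r') (join_shift \<theta>)"
proof
  fix T
  show "\<theta> T = diff G (e_first r') (join_shift \<theta>) T"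
  proof (cases "T \<in> states G")
    case False
    then show ?thesis using diff_outside_states[OF wf False] chains_outside_states[OF \<theta>] by simp
  next
    case True
    then show ?thesis
    proof (cases rule: states_cases)
      case (coloured T')
      have "diff G' r' (\<lambda>S'. join_shift \<theta> (lift_isolated True S')) = (\<lambda>_. 0)"
        by (rule diff_eq_0_if_vanishing) (simp add: join_shift_lift_isolated_True)
      then show ?thesis
        using diff_at_lift_isolated[OF coloured(1)] coloured(2) vanishing[OF coloured(1)] by simp
    next
      case (uncoloured T')
      have "diff G' r' (\<lambda>S'. join_shift \<theta> (lift_isolated False S')) = diff G' r' (\<lambda>S'. \<theta> (lift_joined S'))"
        by (rule diff_cong) (simp add: join_shift_lift_isolated_False)
      moreover have "\<theta> (lift_isolated False T') = diff G' r' (\<lambda>S'. \<theta> (lift_joined S')) T'"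
        using diff_at_lift_joined[OF uncoloured(1), of r' \<theta>] closed
          vanishing[OF recolour_in_states[OF uncoloured(1) vc_v_verts]]
        by (simp split: if_splits)
      ultimately show ?thesis
        using diff_at_lift_isolated[OF uncoloured(1)] uncoloured(2) by simp
    next
      case (joined T')
      have "diff G' r' (\<lambda>S'. join_shift \<theta> (lift_joined S')) = (\<lambda>_. 0)"
        by (rule diff_eq_0_if_vanishing) (simp add: join_shift_lift_joined)
      then show ?thesis
        using diff_at_lift_joined[OF joined(1), of r' "join_shift \<theta>"] joined(2)
          join_shift_lift_isolated_False[OF joined(1)]
          join_shift_lift_isolated_True[OF recolour_in_states[OF joined(1) vc_v_verts]]
        by simp
    qed
  qed
qed

lemma cocycle_homologous_lift_restrict_x:
  assumes \<phi>: "\<phi> \<in> chains G i j" and closed: "diff G (e_first r') \<phi> = (\<lambda>_. 0)"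
  shows "\<exists>\<chi>\<in>chains G (i - 1) j. (\<lambda>S. \<phi> S - lift_cochain (restrict_x \<phi>) S) = diff G (e_first r') \<chi>"
proof -
  let ?\<theta> = "\<lambda>S. \<phi> S - lift_cochain (restrict_x \<phi>) S"
  have \<theta>: "?\<theta> \<in> chains G i j"
    using additive_subgroup_diff[OF additive_subgroup_chains \<phi> lift_cochain_chains[OF restrict_x_chains[OF \<phi>]]]
    by simp
  have "diff G (e_first r') ?\<theta> = (\<lambda>_. 0)"
    unfolding diff_diff diff_lift_cochain restrict_x_diff[symmetric] closed
    by (simp add: restrict_x_def lift_cochain_def pullback_uncolour_def fun_eq_iff)
  moreover have "?\<theta> (lift_isolated True T') = 0" if "T' \<in> states G'" for T'
    using lift_cochain_lift_isolated_True[OF that] that by (simp add: restrict_x_def)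
  ultimately show ?thesis
    using cocycle_eq_diff_join_shift[OF \<theta>] join_shift_chains[OF \<theta>] by blast
qed

lemma restrict_x_0: "restrict_x (\<lambda>_. 0) = (\<lambda>_. 0)"
  by (simp add: restrict_x_def fun_eq_iff)

lemma lift_cochain_0: "lift_cochain (\<lambda>_. 0) = (\<lambda>_. 0)"
  by (simp add: lift_cochain_def pullback_uncolour_def fun_eq_iff)

lemma restrict_x_cycles: "\<phi> \<in> cycles G (e_first r') i j \<Longrightarrow> restrict_x \<phi> \<in> cycles G' r' i (j - 1)"
  unfolding cycles_def using restrict_x_chains restrict_x_diff[of r' \<phi>] restrict_x_0 by simp

lemma lift_cochain_cycles: "\<psi> \<in> cycles G' r' i (j - 1) \<Longrightarrow> lift_cochain \<psi> \<in> cycles G (e_first r') i j"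
  unfolding cycles_def using lift_cochain_chains diff_lift_cochain[of r' \<psi>] lift_cochain_0 by simp

lemma cohom_e_first_iso: "cohom G (e_first r') i j \<cong> cohom G' r' i (j - 1)"
  unfolding cohom_eq_pointwise_FactGroup
proof (rule pointwise_FactGroup_iso[where \<Phi> = restrict_x])
  show "additive_subgroup (cycles G (e_first r') i j)" "additive_subgroup (boundaries G (e_first r') i j)"
    "additive_subgroup (boundaries G' r' i (j - 1))"
    by (rule additive_subgroup_cycles additive_subgroup_boundaries)+
  show "restrict_x (\<lambda>S. x S + y S) = (\<lambda>S. restrict_x x S + restrict_x y S)" for x y
    by (simp add: restrict_x_def fun_eq_iff)
  show "restrict_x ` cycles G (e_first r') i j = cycles G' r' i (j - 1)"
  proof (intro equalityI subsetI)
    fix \<psi> assume \<psi>: "\<psi> \<in> cycles G' r' i (j - 1)"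
    then have "\<psi> = restrict_x (lift_cochain \<psi>)"
      using restrict_x_lift_cochain[of \<psi> i "j - 1"] by (simp add: cycles_def)
    then show "\<psi> \<in> restrict_x ` cycles G (e_first r') i j"
      using lift_cochain_cycles[OF \<psi>] by blast
  qed (use restrict_x_cycles in blast)
next
  fix \<phi> assume "\<phi> \<in> cycles G (e_first r') i j"
  then have \<phi>: "\<phi> \<in> chains G i j" and closed: "diff G (e_first r') \<phi> = (\<lambda>_. 0)"
    by (simp_all add: cycles_def)
  show "restrict_x \<phi> \<in> boundaries G' r' i (j - 1) \<longleftrightarrow> \<phi> \<in> boundaries G (e_first r') i j"
  proof
    assume "restrict_x \<phi> \<in> boundaries G' r' i (j - 1)"
    then obtain \<eta> where \<eta>: "\<eta> \<in> chains G' (i - 1) (j - 1)" "restrict_x \<phi> = diff G' r' \<eta>"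
      unfolding mem_boundaries_iff by blast
    obtain \<chi> where \<chi>: "\<chi> \<in> chains G (i - 1) j"
      and homologous: "(\<lambda>S. \<phi> S - lift_cochain (restrict_x \<phi>) S) = diff G (e_first r') \<chi>"
      using cocycle_homologous_lift_restrict_x[OF \<phi> closed] by blast
    have "lift_cochain (restrict_x \<phi>) = diff G (e_first r') (lift_cochain \<eta>)"
      using \<eta>(2) diff_lift_cochain by simp
    then have "\<phi> = diff G (e_first r') (\<lambda>S. \<chi> S + lift_cochain \<eta> S)"
      using homologous by (simp add: diff_add fun_eq_iff algebra_simps)
    moreover have "(\<lambda>S. \<chi> S + lift_cochain \<eta> S) \<in> chains G (i - 1) j"
      using additive_subgroup_add[OF additive_subgroup_chains \<chi> lift_cochain_chains] \<eta>(1) by simp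
    ultimately show "\<phi> \<in> boundaries G (e_first r') i j"
      unfolding mem_boundaries_iff by blast
  next
    assume "\<phi> \<in> boundaries G (e_first r') i j"
    then obtain \<eta> where "\<eta> \<in> chains G (i - 1) j" "\<phi> = diff G (e_first r') \<eta>"
      unfolding mem_boundaries_iff by blast
    then show "restrict_x \<phi> \<in> boundaries G' r' i (j - 1)"
      unfolding mem_boundaries_iff using restrict_x_chains restrict_x_diff by fastforce
  qed
qed

end

lemma pendant_edgeE:
  assumes wf: "wf_graph G" and "pendant_edge G e"
  obtains v w where "pendant G e v w"
proof -
  obtain v where e: "e \<in> edges G" and v: "v \<in> ends G e" and "degree G v = 1"
    using assms(2) unfolding pendant_edge_def by blast
  let ?A = "{f \<in> edges G. v \<in> ends G f \<and> card (ends G f) = 2}"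
  let ?B = "{f \<in> edges G. ends G f = {v}}"
  have card_AB: "card ?A + 2 * card ?B = 1" using \<open>degree G v = 1\<close> unfolding degree_def by simp
  then have "card ?B = 0" by linarith
  then have no_loop: "?B = {}" using wf_graph_finite[OF wf] by simp
  with card_AB have "card ?A = 1" by simp
  then obtain a where a: "?A = {a}" by (rule card_1_singletonE)
  have two_ends: "card (ends G f) = 2" if f: "f \<in> edges G" "v \<in> ends G f" for f
  proof -
    have "1 \<le> card (ends G f)" "card (ends G f) \<le> 2" using wf f(1) by (auto simp: wf_graph_def)
    moreover have "ends G f \<noteq> {v}" using no_loop f(1) by blast
    then have "card (ends G f) \<noteq> 1" using f(2) by (auto simp: card_1_singleton_iff)
    ultimately show ?thesis by linarith
  qed
  have "e \<in> ?A" using two_ends[OF e v] e v by simp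
  then have A_e: "?A = {e}" using a by auto
  have "card (ends G e - {v}) = 1"
    using two_ends[OF e v] v wf_graph_finite_ends[OF wf e] by simp
  then obtain w where "ends G e - {v} = {w}" by (rule card_1_singletonE)
  then have w: "ends G e = {v, w}" "v \<noteq> w" using v by auto
  have only_e: "f = e" if "f \<in> edges G" "v \<in> ends G f" for f
  proof -
    have "f \<in> ?A" using two_ends[OF that] that by simp
    then show ?thesis using A_e by simp
  qed
  show thesis
    using pendant.intro[OF wf e w only_e] by (rule that)
qed

theorem mainTheorem10:
  fixes G :: "('v, 'e) graph" and e :: 'e
    and r :: "'e \<Rightarrow> nat" and r' :: "'e \<Rightarrow> nat"
  assumes "wf_graph G"
    and "pendant_edge G e"
    and "inj_on r (edges G)"
    and "inj_on r' (edges (contract G e))"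
  shows "\<forall>i j. cohom G r i j \<cong> cohom (contract G e) r' i (j - 1)"
proof (intro allI)
  fix i j
  obtain v w where pendant: "pendant G e v w"
    using pendant_edgeE[OF assms(1,2)] .
  have "cohom G r i j \<cong> cohom G (pendant.e_first e r') i j"
    using cohom_iso_change_ordering[OF assms(1,3) pendant.inj_on_e_first[OF pendant assms(4)]] .
  also have "\<dots> \<cong> cohom (contract G e) r' i (j - 1)"
    using pendant.cohom_e_first_iso[OF pendant] .
  finally show "cohom G r i j \<cong> cohom (contract G e) r' i (j - 1)" .
qed

end
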